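(* $(\mathcal{D}, \delta, \varepsilon)$ is a comonad on $\mathsf{CLAC}$.
   Context: Composition is written in diagrammatic order ($fg$ means first $f$, then $g$). A left additive category is a category whose hom-sets are commutative monoids with $f(g+h)=fg+fh$ and $f0=0$; a map $h$ is additive if $(f+g)h=fh+gh$ and $0h=0$. A Cartesian left additive category is a left additive category with finite products whose projections are additive. $\mathsf{CLAC}$ is the category of Cartesian left additive categories and strict Cartesian left additive functors (functors preserving finite products strictly, i.e. $\mathsf{F}(A\times B)=\mathsf{F}(A)\times\mathsf{F}(B)$, terminal object and projections preserved on the nose, and preserving sums and zeros). For a Cartesian left additive category $\mathbb{X}$, let $\mathsf{P}(A)=A\times A$, $\mathsf{P}(f)=f\times f$. A pre-$\mathsf{D}$-sequence $f_\bullet: A \to B$ is a sequence $(f_0,f_1,\dots)$ with $f_n:\mathsf{P}^n(A)\to B$; for maps $h,k$ of $\mathbb{X}$ set $(h\cdot f_\bullet)_n=\mathsf{P}^n(h)f_n$ and $(f_\bullet\cdot k)_n=f_n k$. The tangent is $\mathsf{T}(f_\bullet)_n=\langle \mathsf{P}^n(\pi_0)f_n, f_{n+1}\rangle$ and the differential is $\mathsf{D}[f_\bullet]_n=f_{n+1}$. Identities are $i_0=1$, $i_n=\pi_1\pi_1\cdots\pi_1$ ($n$ times), composition is $(f_\bullet\ast g_\bullet)_n=\mathsf{T}^n(f_\bullet)_0\, g_n$, sums and zero are pointwise, projections are $i_\bullet\cdot\pi_j$ and pairing is pointwise $\langle f_\bullet,g_\bullet\rangle_n=\langle f_n,g_n\rangle$.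 A $\mathsf{D}$-sequence is a pre-$\mathsf{D}$-sequence such that for all $n$: $\langle 1,0\rangle\cdot\mathsf{D}^{n+1}[f_\bullet]=0_\bullet$; $(1\times(\pi_0+\pi_1))\cdot\mathsf{D}^{n+1}[f_\bullet]=((1\times\pi_0)\cdot\mathsf{D}^{n+1}[f_\bullet])+((1\times\pi_1)\cdot\mathsf{D}^{n+1}[f_\bullet])$; $\ell\cdot\mathsf{D}^{n+2}[f_\bullet]=\mathsf{D}^{n+1}[f_\bullet]$; $c\cdot\mathsf{D}^{n+2}[f_\bullet]=\mathsf{D}^{n+2}[f_\bullet]$, where $\ell=\langle 1,0\rangle\times\langle 0,1\rangle$ and $c=1\times\langle\pi_1,\pi_0\rangle\times 1$. $\mathcal{D}[\mathbb{X}]$ is the Cartesian left additive category of $\mathsf{D}$-sequences of $\mathbb{X}$ (same objects as $\mathbb{X}$). For a strict Cartesian left additive functor $\mathsf{F}$, $\mathcal{D}[\mathsf{F}]$ acts as $\mathsf{F}$ on objects and by $\mathcal{D}[\mathsf{F}](f_\bullet)_n=\mathsf{F}(f_n)$. The counit $\varepsilon:\mathcal{D}[\mathbb{X}]\to\mathbb{X}$ is the identity on objects and $\varepsilon(f_\bullet)=f_0$; the comultiplication $\delta:\mathcal{D}[\mathbb{X}]\to\mathcal{D}[\mathcal{D}[\mathbb{X}]]$ is the identity on objects and $\delta(f_\bullet)_0=f_\bullet$, $\delta(f_\bullet)_n=\mathsf{D}^n[f_\bullet]$. *)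

theory Defs
  imports Main
begin

text \<open>Composition is diagrammatic: ccomp X f g means first f, then g.\<close>

record ('o, 'a) clac =
  cObj  :: "'o set"
  cArr  :: "'a set"
  cdom  :: "'a \<Rightarrow> 'o"
  ccod  :: "'a \<Rightarrow> 'o"
  ccomp :: "'a \<Rightarrow> 'a \<Rightarrow> 'a"
  cid   :: "'o \<Rightarrow> 'a"
  cadd  :: "'a \<Rightarrow> 'a \<Rightarrow> 'a"
  czero :: "'o \<Rightarrow> 'o \<Rightarrow> 'a"
  cprod :: "'o \<Rightarrow> 'o \<Rightarrow> 'o"
  cterm :: "'o"
  cpi0  :: "'o \<Rightarrow> 'o \<Rightarrow> 'a"
  cpi1  :: "'o \<Rightarrow> 'o \<Rightarrow> 'a"
  cpair :: "'a \<Rightarrow> 'a \<Rightarrow> 'a"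

definition hom :: "('o, 'a) clac \<Rightarrow> 'o \<Rightarrow> 'o \<Rightarrow> 'a set" where
  "hom X A B = {f \<in> cArr X. cdom X f = A \<and> ccod X f = B}"

definition is_clac :: "('o, 'a) clac \<Rightarrow> bool" where
  "is_clac X \<longleftrightarrow>
    \<comment> \<open>category\<close>
    (\<forall>f\<in>cArr X. cdom X f \<in> cObj X \<and> ccod X f \<in> cObj X)
  \<and> (\<forall>A\<in>cObj X. cid X A \<in> hom X A A)
  \<and> (\<forall>A\<in>cObj X. \<forall>B\<in>cObj X. \<forall>C\<in>cObj X. \<forall>f\<in>hom X A B. \<forall>g\<in>hom X B C.
        ccomp X f g \<in> hom X A C)
  \<and> (\<forall>A\<in>cObj X. \<forall>B\<in>cObj X. \<forall>C\<in>cObj X. \<forall>D\<in>cObj X.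
        \<forall>f\<in>hom X A B. \<forall>g\<in>hom X B C. \<forall>h\<in>hom X C D.
        ccomp X (ccomp X f g) h = ccomp X f (ccomp X g h))
  \<and> (\<forall>A\<in>cObj X. \<forall>B\<in>cObj X. \<forall>f\<in>hom X A B.
        ccomp X (cid X A) f = f \<and> ccomp X f (cid X B) = f)
    \<comment> \<open>hom-sets are commutative monoids\<close>
  \<and> (\<forall>A\<in>cObj X. \<forall>B\<in>cObj X. \<forall>f\<in>hom X A B. \<forall>g\<in>hom X A B.
        cadd X f g \<in> hom X A B \<and> cadd X f g = cadd X g f)
  \<and> (\<forall>A\<in>cObj X. \<forall>B\<in>cObj X. \<forall>f\<in>hom X A B. \<forall>g\<in>hom X A B. \<forall>h\<in>hom X A B.
        cadd X (cadd X f g) h = cadd X f (cadd X g h))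
  \<and> (\<forall>A\<in>cObj X. \<forall>B\<in>cObj X. czero X A B \<in> hom X A B \<and>
        (\<forall>f\<in>hom X A B. cadd X f (czero X A B) = f))
    \<comment> \<open>left additivity: f(g+h) = fg + fh, f0 = 0\<close>
  \<and> (\<forall>A\<in>cObj X. \<forall>B\<in>cObj X. \<forall>C\<in>cObj X. \<forall>f\<in>hom X A B. \<forall>g\<in>hom X B C. \<forall>h\<in>hom X B C.
        ccomp X f (cadd X g h) = cadd X (ccomp X f g) (ccomp X f h)
      \<and> ccomp X f (czero X B C) = czero X A C)
    \<comment> \<open>terminal object\<close>
  \<and> cterm X \<in> cObj X
  \<and> (\<forall>A\<in>cObj X. \<exists>!h. h \<in> hom X A (cterm X))
    \<comment> \<open>binary products\<close>
  \<and> (\<forall>A\<in>cObj X. \<forall>B\<in>cObj X. cprod X A B \<in> cObj X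
        \<and> cpi0 X A B \<in> hom X (cprod X A B) A \<and> cpi1 X A B \<in> hom X (cprod X A B) B)
  \<and> (\<forall>A\<in>cObj X. \<forall>B\<in>cObj X. \<forall>C\<in>cObj X. \<forall>f\<in>hom X C A. \<forall>g\<in>hom X C B.
        cpair X f g \<in> hom X C (cprod X A B)
      \<and> ccomp X (cpair X f g) (cpi0 X A B) = f
      \<and> ccomp X (cpair X f g) (cpi1 X A B) = g)
  \<and> (\<forall>A\<in>cObj X. \<forall>B\<in>cObj X. \<forall>C\<in>cObj X. \<forall>h\<in>hom X C (cprod X A B).
        h = cpair X (ccomp X h (cpi0 X A B)) (ccomp X h (cpi1 X A B)))
    \<comment> \<open>projections are additive\<close>
  \<and> (\<forall>A\<in>cObj X. \<forall>B\<in>cObj X. \<forall>C\<in>cObj X. \<forall>f\<in>hom X C (cprod X A B). \<forall>g\<in>hom X C (cprod X A B).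
        ccomp X (cadd X f g) (cpi0 X A B) = cadd X (ccomp X f (cpi0 X A B)) (ccomp X g (cpi0 X A B))
      \<and> ccomp X (cadd X f g) (cpi1 X A B) = cadd X (ccomp X f (cpi1 X A B)) (ccomp X g (cpi1 X A B)))
  \<and> (\<forall>A\<in>cObj X. \<forall>B\<in>cObj X. \<forall>C\<in>cObj X.
        ccomp X (czero X C (cprod X A B)) (cpi0 X A B) = czero X C A
      \<and> ccomp X (czero X C (cprod X A B)) (cpi1 X A B) = czero X C B)"

record ('o, 'p, 'a, 'b) sfun =
  fobj :: "'o \<Rightarrow> 'p"
  farr :: "'a \<Rightarrow> 'b"

definition is_sclf :: "('o, 'a) clac \<Rightarrow> ('p, 'b) clac \<Rightarrow> ('o, 'p, 'a, 'b) sfun \<Rightarrow> bool" where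
  "is_sclf X Y F \<longleftrightarrow>
    (\<forall>A\<in>cObj X. fobj F A \<in> cObj Y)
  \<and> (\<forall>A\<in>cObj X. \<forall>B\<in>cObj X. \<forall>f\<in>hom X A B. farr F f \<in> hom Y (fobj F A) (fobj F B))
  \<and> (\<forall>A\<in>cObj X. farr F (cid X A) = cid Y (fobj F A))
  \<and> (\<forall>A\<in>cObj X. \<forall>B\<in>cObj X. \<forall>C\<in>cObj X. \<forall>f\<in>hom X A B. \<forall>g\<in>hom X B C.
        farr F (ccomp X f g) = ccomp Y (farr F f) (farr F g))
  \<and> (\<forall>A\<in>cObj X. \<forall>B\<in>cObj X.
        fobj F (cprod X A B) = cprod Y (fobj F A) (fobj F B)
      \<and> farr F (cpi0 X A B) = cpi0 Y (fobj F A) (fobj F B)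
      \<and> farr F (cpi1 X A B) = cpi1 Y (fobj F A) (fobj F B))
  \<and> fobj F (cterm X) = cterm Y
  \<and> (\<forall>A\<in>cObj X. \<forall>B\<in>cObj X. \<forall>f\<in>hom X A B. \<forall>g\<in>hom X A B.
        farr F (cadd X f g) = cadd Y (farr F f) (farr F g))
  \<and> (\<forall>A\<in>cObj X. \<forall>B\<in>cObj X. farr F (czero X A B) = czero Y (fobj F A) (fobj F B))"

definition idF :: "('o, 'o, 'a, 'a) sfun" where
  "idF = \<lparr>fobj = id, farr = id\<rparr>"

definition fcompose :: "('o, 'p, 'a, 'b) sfun \<Rightarrow> ('p, 'q, 'b, 'c) sfun \<Rightarrow> ('o, 'q, 'a, 'c) sfun" where
  "fcompose F G = \<lparr>fobj = fobj G \<circ> fobj F, farr = farr G \<circ> farr F\<rparr>"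

definition feq :: "('o, 'a) clac \<Rightarrow> ('o, 'p, 'a, 'b) sfun \<Rightarrow> ('o, 'p, 'a, 'b) sfun \<Rightarrow> bool" where
  "feq X F G \<longleftrightarrow> (\<forall>A\<in>cObj X. fobj F A = fobj G A) \<and> (\<forall>f\<in>cArr X. farr F f = farr G f)"

definition Pobj :: "('o, 'a) clac \<Rightarrow> 'o \<Rightarrow> 'o" where
  "Pobj X A = cprod X A A"

definition Pn :: "('o, 'a) clac \<Rightarrow> nat \<Rightarrow> 'o \<Rightarrow> 'o" where
  "Pn X n A = (Pobj X ^^ n) A"

definition cross :: "('o, 'a) clac \<Rightarrow> 'a \<Rightarrow> 'a \<Rightarrow> 'a" where
  "cross X h k = cpair X (ccomp X (cpi0 X (cdom X h) (cdom X k)) h)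
                         (ccomp X (cpi1 X (cdom X h) (cdom X k)) k)"

definition Parr :: "('o, 'a) clac \<Rightarrow> 'a \<Rightarrow> 'a" where
  "Parr X f = cross X f f"

definition Pnarr :: "('o, 'a) clac \<Rightarrow> nat \<Rightarrow> 'a \<Rightarrow> 'a" where
  "Pnarr X n f = (Parr X ^^ n) f"

definition lact :: "('o, 'a) clac \<Rightarrow> 'a \<Rightarrow> (nat \<Rightarrow> 'a) \<Rightarrow> (nat \<Rightarrow> 'a)" where
  "lact X h f = (\<lambda>n. ccomp X (Pnarr X n h) (f n))"

definition ract :: "('o, 'a) clac \<Rightarrow> (nat \<Rightarrow> 'a) \<Rightarrow> 'a \<Rightarrow> (nat \<Rightarrow> 'a)" where
  "ract X f k = (\<lambda>n. ccomp X (f n) k)"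

definition Dseq :: "(nat \<Rightarrow> 'a) \<Rightarrow> (nat \<Rightarrow> 'a)" where
  "Dseq f = (\<lambda>n. f (Suc n))"

definition sdom :: "('o, 'a) clac \<Rightarrow> (nat \<Rightarrow> 'a) \<Rightarrow> 'o" where
  "sdom X f = cdom X (f 0)"

definition scod :: "('o, 'a) clac \<Rightarrow> (nat \<Rightarrow> 'a) \<Rightarrow> 'o" where
  "scod X f = ccod X (f 0)"

definition sadd :: "('o, 'a) clac \<Rightarrow> (nat \<Rightarrow> 'a) \<Rightarrow> (nat \<Rightarrow> 'a) \<Rightarrow> (nat \<Rightarrow> 'a)" where
  "sadd X f g = (\<lambda>n. cadd X (f n) (g n))"

definition szero :: "('o, 'a) clac \<Rightarrow> 'o \<Rightarrow> 'o \<Rightarrow> (nat \<Rightarrow> 'a)" where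
  "szero X A B = (\<lambda>n. czero X (Pn X n A) B)"

definition pre_dseq :: "('o, 'a) clac \<Rightarrow> (nat \<Rightarrow> 'a) \<Rightarrow> bool" where
  "pre_dseq X f \<longleftrightarrow> (\<forall>n. f n \<in> hom X (Pn X n (sdom X f)) (scod X f))"

definition dseq :: "('o, 'a) clac \<Rightarrow> (nat \<Rightarrow> 'a) \<Rightarrow> bool" where
  "dseq X f \<longleftrightarrow> pre_dseq X f \<and>
    (\<forall>n. let A = Pn X n (sdom X f); B = scod X f;
             p0 = cpi0 X A A; p1 = cpi1 X A A; one = cid X A; z = czero X A A;
             F1 = (Dseq ^^ (n + 1)) f; F2 = (Dseq ^^ (n + 2)) f
         in lact X (cpair X one z) F1 = szero X A B
          \<and> lact X (cross X one (cadd X p0 p1)) F1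
              = sadd X (lact X (cross X one p0) F1) (lact X (cross X one p1) F1)
          \<and> lact X (cross X (cpair X one z) (cpair X z one)) F2 = F1
          \<and> lact X (cpair X (cross X p0 p0) (cross X p1 p1)) F2 = F2)"

definition tan :: "('o, 'a) clac \<Rightarrow> (nat \<Rightarrow> 'a) \<Rightarrow> (nat \<Rightarrow> 'a)" where
  "tan X f = (\<lambda>n. cpair X (ccomp X (Pnarr X n (cpi0 X (sdom X f) (sdom X f))) (f n)) (f (Suc n)))"

definition scomp :: "('o, 'a) clac \<Rightarrow> (nat \<Rightarrow> 'a) \<Rightarrow> (nat \<Rightarrow> 'a) \<Rightarrow> (nat \<Rightarrow> 'a)" where
  "scomp X f g = (\<lambda>n. ccomp X (((tan X) ^^ n) f 0) (g n))"

primrec iseq :: "('o, 'a) clac \<Rightarrow> 'o \<Rightarrow> nat \<Rightarrow> 'a" where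
  "iseq X A 0 = cid X A"
| "iseq X A (Suc n) = ccomp X (cpi1 X (Pn X n A) (Pn X n A)) (iseq X A n)"

definition Dcat :: "('o, 'a) clac \<Rightarrow> ('o, nat \<Rightarrow> 'a) clac" where
  "Dcat X = \<lparr> cObj = cObj X,
              cArr = {f. dseq X f},
              cdom = sdom X,
              ccod = scod X,
              ccomp = scomp X,
              cid = iseq X,
              cadd = sadd X,
              czero = szero X,
              cprod = cprod X,
              cterm = cterm X,
              cpi0 = (\<lambda>A B. ract X (iseq X (cprod X A B)) (cpi0 X A B)),
              cpi1 = (\<lambda>A B. ract X (iseq X (cprod X A B)) (cpi1 X A B)),
              cpair = (\<lambda>f g n. cpair X (f n) (g n)) \<rparr>"

definition Dfun :: "('o, 'p, 'a, 'b) sfun \<Rightarrow> ('o, 'p, nat \<Rightarrow> 'a, nat \<Rightarrow> 'b) sfun" where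
  "Dfun F = \<lparr>fobj = fobj F, farr = (\<lambda>f n. farr F (f n))\<rparr>"

definition epsF :: "('o, 'o, nat \<Rightarrow> 'a, 'a) sfun" where
  "epsF = \<lparr>fobj = id, farr = (\<lambda>f. f 0)\<rparr>"

definition deltaF :: "('o, 'o, nat \<Rightarrow> 'a, nat \<Rightarrow> nat \<Rightarrow> 'a) sfun" where
  "deltaF = \<lparr>fobj = id, farr = (\<lambda>f n. (Dseq ^^ n) f)\<rparr>"

end

theory Submission
  imports Defs
begin

text \<open>
  Apart from composition \<open>(f * g)\<^sub>n = T\<^sup>n(f)\<^sub>0 g\<^sub>n\<close>, all structure of \<open>\<D>[X]\<close> is inherited
  termwise from \<open>X\<close>. Two facts carry the proof that \<open>\<D>[X]\<close> is a Cartesian left additive category.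
  First, the tangent is functorial, \<open>T(f * g) = T(f) * T(g)\<close>, which makes composition associative.
  Second, for a D-sequence \<open>h\<close> the structure maps occurring in the D-sequence axioms pass through
  \<open>T(h)\<close> and \<open>T(T(h))\<close>, which transports the axioms from \<open>g\<close> to \<open>h * g\<close>. Closure under sums,
  zeros, pairing and precomposition with additive maps is a direct termwise check.
  For the comonad, \<open>\<delta>(f) = (D\<^sup>n[f])\<^sub>n\<close> is a D-sequence of \<open>\<D>[\<D>[X]]\<close> because maps of \<open>X\<close>, viewed as
  D-sequences, act on it componentwise; the comonad laws then reduce to \<open>D\<^sup>0 = id\<close> and
  \<open>D\<^sup>m D\<^sup>n = D\<^sup>m\<^sup>+\<^sup>n\<close>, which hold on the nose.
\<close>

section \<open>Cartesian left additive categories\<close>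

locale clac_category =
  fixes X :: "('o, 'a) clac"
  assumes arr_ob: "\<forall>f\<in>cArr X. cdom X f \<in> cObj X \<and> ccod X f \<in> cObj X"
    and id_hom: "\<forall>A\<in>cObj X. cid X A \<in> hom X A A"
    and comp_hom: "\<forall>A\<in>cObj X. \<forall>B\<in>cObj X. \<forall>C\<in>cObj X. \<forall>f\<in>hom X A B. \<forall>g\<in>hom X B C.
        ccomp X f g \<in> hom X A C"
    and comp_assoc: "\<forall>A\<in>cObj X. \<forall>B\<in>cObj X. \<forall>C\<in>cObj X. \<forall>D\<in>cObj X.
        \<forall>f\<in>hom X A B. \<forall>g\<in>hom X B C. \<forall>h\<in>hom X C D.
        ccomp X (ccomp X f g) h = ccomp X f (ccomp X g h)"
    and comp_id: "\<forall>A\<in>cObj X. \<forall>B\<in>cObj X. \<forall>f\<in>hom X A B.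
        ccomp X (cid X A) f = f \<and> ccomp X f (cid X B) = f"
    and add_hom_comm: "\<forall>A\<in>cObj X. \<forall>B\<in>cObj X. \<forall>f\<in>hom X A B. \<forall>g\<in>hom X A B.
        cadd X f g \<in> hom X A B \<and> cadd X f g = cadd X g f"
    and add_assoc_hom: "\<forall>A\<in>cObj X. \<forall>B\<in>cObj X. \<forall>f\<in>hom X A B. \<forall>g\<in>hom X A B. \<forall>h\<in>hom X A B.
        cadd X (cadd X f g) h = cadd X f (cadd X g h)"
    and zero_neutral: "\<forall>A\<in>cObj X. \<forall>B\<in>cObj X. czero X A B \<in> hom X A B \<and>
        (\<forall>f\<in>hom X A B. cadd X f (czero X A B) = f)"
    and left_additive: "\<forall>A\<in>cObj X. \<forall>B\<in>cObj X. \<forall>C\<in>cObj X. \<forall>f\<in>hom X A B. \<forall>g\<in>hom X B C. \<forall>h\<in>hom X B C.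
        ccomp X f (cadd X g h) = cadd X (ccomp X f g) (ccomp X f h)
      \<and> ccomp X f (czero X B C) = czero X A C"
    and term_ob: "cterm X \<in> cObj X"
    and term_unique: "\<forall>A\<in>cObj X. \<exists>!h. h \<in> hom X A (cterm X)"
    and prod_proj_hom: "\<forall>A\<in>cObj X. \<forall>B\<in>cObj X. cprod X A B \<in> cObj X
        \<and> cpi0 X A B \<in> hom X (cprod X A B) A \<and> cpi1 X A B \<in> hom X (cprod X A B) B"
    and pair_universal: "\<forall>A\<in>cObj X. \<forall>B\<in>cObj X. \<forall>C\<in>cObj X. \<forall>f\<in>hom X C A. \<forall>g\<in>hom X C B.
        cpair X f g \<in> hom X C (cprod X A B)
      \<and> ccomp X (cpair X f g) (cpi0 X A B) = f
      \<and> ccomp X (cpair X f g) (cpi1 X A B) = g"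
    and pair_surj: "\<forall>A\<in>cObj X. \<forall>B\<in>cObj X. \<forall>C\<in>cObj X. \<forall>h\<in>hom X C (cprod X A B).
        h = cpair X (ccomp X h (cpi0 X A B)) (ccomp X h (cpi1 X A B))"
    and proj_additive: "\<forall>A\<in>cObj X. \<forall>B\<in>cObj X. \<forall>C\<in>cObj X. \<forall>f\<in>hom X C (cprod X A B). \<forall>g\<in>hom X C (cprod X A B).
        ccomp X (cadd X f g) (cpi0 X A B) = cadd X (ccomp X f (cpi0 X A B)) (ccomp X g (cpi0 X A B))
      \<and> ccomp X (cadd X f g) (cpi1 X A B) = cadd X (ccomp X f (cpi1 X A B)) (ccomp X g (cpi1 X A B))"
    and proj_zero_hom: "\<forall>A\<in>cObj X. \<forall>B\<in>cObj X. \<forall>C\<in>cObj X.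
        ccomp X (czero X C (cprod X A B)) (cpi0 X A B) = czero X C A
      \<and> ccomp X (czero X C (cprod X A B)) (cpi1 X A B) = czero X C B"

lemma clac_category_iff_is_clac: "clac_category X \<longleftrightarrow> is_clac X"
  unfolding clac_category_def is_clac_def by (simp only: conj_assoc)

lemma Dseq_app: "Dseq f n = f (Suc n)"
  by (simp add: Dseq_def)

lemma Dpow_app: "(Dseq ^^ k) f n = f (n + k)"
  by (induct k arbitrary: n) (auto simp: Dseq_def)

definition spair :: "('o, 'a) clac \<Rightarrow> (nat \<Rightarrow> 'a) \<Rightarrow> (nat \<Rightarrow> 'a) \<Rightarrow> nat \<Rightarrow> 'a" where
  "spair X f g = (\<lambda>n. cpair X (f n) (g n))"

context clac_category
begin

abbreviation ar :: "'a \<Rightarrow> bool" where "ar f \<equiv> f \<in> cArr X"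
abbreviation Ob :: "'o set" where "Ob \<equiv> cObj X"

lemma dom_ob[simp]: "ar f \<Longrightarrow> cdom X f \<in> Ob" and cod_ob[simp]: "ar f \<Longrightarrow> ccod X f \<in> Ob"
  using arr_ob by auto

lemma hom_iff: "f \<in> hom X A B \<longleftrightarrow> ar f \<and> cdom X f = A \<and> ccod X f = B"
  unfolding hom_def by auto

lemma id_ty: "A \<in> Ob \<Longrightarrow> ar (cid X A) \<and> cdom X (cid X A) = A \<and> ccod X (cid X A) = A"
  using id_hom hom_iff by blast

lemma id_ar[simp]: "A \<in> Ob \<Longrightarrow> ar (cid X A)"
  and id_dom[simp]: "A \<in> Ob \<Longrightarrow> cdom X (cid X A) = A"
  and id_cod[simp]: "A \<in> Ob \<Longrightarrow> ccod X (cid X A) = A"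
  using id_ty by auto

lemma comp_ty: "ar f \<Longrightarrow> ar g \<Longrightarrow> ccod X f = cdom X g \<Longrightarrow>
   ar (ccomp X f g) \<and> cdom X (ccomp X f g) = cdom X f \<and> ccod X (ccomp X f g) = ccod X g"
  using comp_hom[rule_format, of "cdom X f" "ccod X f" "ccod X g" f g] by (simp add: hom_iff)

lemma comp_ar[simp]: "ar f \<Longrightarrow> ar g \<Longrightarrow> ccod X f = cdom X g \<Longrightarrow> ar (ccomp X f g)"
  and comp_dom[simp]: "ar f \<Longrightarrow> ar g \<Longrightarrow> ccod X f = cdom X g \<Longrightarrow> cdom X (ccomp X f g) = cdom X f"
  and comp_cod[simp]: "ar f \<Longrightarrow> ar g \<Longrightarrow> ccod X f = cdom X g \<Longrightarrow> ccod X (ccomp X f g) = ccod X g"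
  using comp_ty by auto

lemma assoc[simp]: "ar f \<Longrightarrow> ar g \<Longrightarrow> ar h \<Longrightarrow> ccod X f = cdom X g \<Longrightarrow> ccod X g = cdom X h \<Longrightarrow>
  ccomp X (ccomp X f g) h = ccomp X f (ccomp X g h)"
  using comp_assoc[rule_format, of "cdom X f" "ccod X f" "ccod X g" "ccod X h" f g h] by (simp add: hom_iff)

lemma id_left[simp]: "ar f \<Longrightarrow> cdom X f = A \<Longrightarrow> ccomp X (cid X A) f = f"
  using comp_id[rule_format, of "cdom X f" "ccod X f" f] by (auto simp add: hom_iff)
lemma id_right[simp]: "ar f \<Longrightarrow> ccod X f = A \<Longrightarrow> ccomp X f (cid X A) = f"
  using comp_id[rule_format, of "cdom X f" "ccod X f" f] by (auto simp add: hom_iff)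

lemma add_ty: "ar f \<Longrightarrow> ar g \<Longrightarrow> cdom X f = cdom X g \<Longrightarrow> ccod X f = ccod X g \<Longrightarrow>
   ar (cadd X f g) \<and> cdom X (cadd X f g) = cdom X f \<and> ccod X (cadd X f g) = ccod X f"
proof -
  assume a: "ar f" "ar g" "cdom X f = cdom X g" "ccod X f = ccod X g"
  have h: "f \<in> hom X (cdom X f) (ccod X f)" "g \<in> hom X (cdom X f) (ccod X f)"
    using a by (simp_all add: hom_iff)
  have "cadd X f g \<in> hom X (cdom X f) (ccod X f)"
    using add_hom_comm[rule_format, OF dom_ob[OF a(1)] cod_ob[OF a(1)] h] by blast
  thus ?thesis by (simp add: hom_iff)
qed

lemma add_ar[simp]: "ar f \<Longrightarrow> ar g \<Longrightarrow> cdom X f = cdom X g \<Longrightarrow> ccod X f = ccod X g \<Longrightarrow> ar (cadd X f g)"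
  and add_dom[simp]: "ar f \<Longrightarrow> ar g \<Longrightarrow> cdom X f = cdom X g \<Longrightarrow> ccod X f = ccod X g \<Longrightarrow> cdom X (cadd X f g) = cdom X f"
  and add_cod[simp]: "ar f \<Longrightarrow> ar g \<Longrightarrow> cdom X f = cdom X g \<Longrightarrow> ccod X f = ccod X g \<Longrightarrow> ccod X (cadd X f g) = ccod X f"
  using add_ty by auto

lemma add_comm: "ar f \<Longrightarrow> ar g \<Longrightarrow> cdom X f = cdom X g \<Longrightarrow> ccod X f = ccod X g \<Longrightarrow> cadd X f g = cadd X g f"
  using add_hom_comm[rule_format, of "cdom X f" "ccod X f" f g] by (simp add: hom_iff)

lemma add_assoc[simp]: "ar f \<Longrightarrow> ar g \<Longrightarrow> ar h \<Longrightarrow> cdom X f = cdom X g \<Longrightarrow> ccod X f = ccod X g \<Longrightarrow>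
   cdom X h = cdom X f \<Longrightarrow> ccod X h = ccod X f \<Longrightarrow> cadd X (cadd X f g) h = cadd X f (cadd X g h)"
  using add_assoc_hom[rule_format, of "cdom X f" "ccod X f" f g h] by (simp add: hom_iff)

lemma add_lcomm: "ar f \<Longrightarrow> ar g \<Longrightarrow> ar h \<Longrightarrow> cdom X f = cdom X g \<Longrightarrow> ccod X f = ccod X g \<Longrightarrow>
   cdom X h = cdom X f \<Longrightarrow> ccod X h = ccod X f \<Longrightarrow> cadd X f (cadd X g h) = cadd X g (cadd X f h)"
  by (metis add_assoc add_comm)

lemma zero_ty: "A \<in> Ob \<Longrightarrow> B \<in> Ob \<Longrightarrow> ar (czero X A B) \<and> cdom X (czero X A B) = A \<and> ccod X (czero X A B) = B"
  using zero_neutral[rule_format, of A B] by (simp add: hom_iff)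

lemma zero_ar[simp]: "A \<in> Ob \<Longrightarrow> B \<in> Ob \<Longrightarrow> ar (czero X A B)"
  and zero_dom[simp]: "A \<in> Ob \<Longrightarrow> B \<in> Ob \<Longrightarrow> cdom X (czero X A B) = A"
  and zero_cod[simp]: "A \<in> Ob \<Longrightarrow> B \<in> Ob \<Longrightarrow> ccod X (czero X A B) = B"
  using zero_ty by auto

lemma add_zero[simp]: "ar f \<Longrightarrow> cdom X f = A \<Longrightarrow> ccod X f = B \<Longrightarrow> cadd X f (czero X A B) = f"
  using zero_neutral[rule_format, of A B] by (auto simp add: hom_iff)

lemma comp_add[simp]: "ar f \<Longrightarrow> ar g \<Longrightarrow> ar h \<Longrightarrow> ccod X f = cdom X g \<Longrightarrow> cdom X g = cdom X h \<Longrightarrow> ccod X g = ccod X h \<Longrightarrow>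
   ccomp X f (cadd X g h) = cadd X (ccomp X f g) (ccomp X f h)"
  using left_additive[rule_format, of "cdom X f" "ccod X f" "ccod X g" f g h] by (simp add: hom_iff)

lemma comp_zero[simp]: "ar f \<Longrightarrow> ccod X f = B \<Longrightarrow> C \<in> Ob \<Longrightarrow>
   ccomp X f (czero X B C) = czero X (cdom X f) C"
  using left_additive[rule_format, of "cdom X f" "ccod X f" C f "czero X B C" "czero X B C"] by (auto simp add: hom_iff)

declare term_ob[simp]

lemma term_uniq: "ar f \<Longrightarrow> ar g \<Longrightarrow> cdom X f = cdom X g \<Longrightarrow> ccod X f = cterm X \<Longrightarrow> ccod X g = cterm X \<Longrightarrow> f = g"
  using term_unique[rule_format, of "cdom X f"] by (auto simp add: hom_iff)

lemma prod_ty: "A \<in> Ob \<Longrightarrow> B \<in> Ob \<Longrightarrow> cprod X A B \<in> Ob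
   \<and> ar (cpi0 X A B) \<and> cdom X (cpi0 X A B) = cprod X A B \<and> ccod X (cpi0 X A B) = A
   \<and> ar (cpi1 X A B) \<and> cdom X (cpi1 X A B) = cprod X A B \<and> ccod X (cpi1 X A B) = B"
  using prod_proj_hom[rule_format, of A B] by (simp add: hom_iff)

lemma prod_ob[simp]: "A \<in> Ob \<Longrightarrow> B \<in> Ob \<Longrightarrow> cprod X A B \<in> Ob"
  and pi0_ar[simp]: "A \<in> Ob \<Longrightarrow> B \<in> Ob \<Longrightarrow> ar (cpi0 X A B)"
  and pi0_dom[simp]: "A \<in> Ob \<Longrightarrow> B \<in> Ob \<Longrightarrow> cdom X (cpi0 X A B) = cprod X A B"
  and pi0_cod[simp]: "A \<in> Ob \<Longrightarrow> B \<in> Ob \<Longrightarrow> ccod X (cpi0 X A B) = A"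
  and pi1_ar[simp]: "A \<in> Ob \<Longrightarrow> B \<in> Ob \<Longrightarrow> ar (cpi1 X A B)"
  and pi1_dom[simp]: "A \<in> Ob \<Longrightarrow> B \<in> Ob \<Longrightarrow> cdom X (cpi1 X A B) = cprod X A B"
  and pi1_cod[simp]: "A \<in> Ob \<Longrightarrow> B \<in> Ob \<Longrightarrow> ccod X (cpi1 X A B) = B"
  using prod_ty by auto

lemma pair_ty: "ar f \<Longrightarrow> ar g \<Longrightarrow> cdom X f = cdom X g \<Longrightarrow>
   ar (cpair X f g) \<and> cdom X (cpair X f g) = cdom X f \<and> ccod X (cpair X f g) = cprod X (ccod X f) (ccod X g)
   \<and> ccomp X (cpair X f g) (cpi0 X (ccod X f) (ccod X g)) = f
   \<and> ccomp X (cpair X f g) (cpi1 X (ccod X f) (ccod X g)) = g"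
  using pair_universal[rule_format, of "ccod X f" "ccod X g" "cdom X f" f g] by (simp add: hom_iff)

lemma pair_ar[simp]: "ar f \<Longrightarrow> ar g \<Longrightarrow> cdom X f = cdom X g \<Longrightarrow> ar (cpair X f g)"
  and pair_dom[simp]: "ar f \<Longrightarrow> ar g \<Longrightarrow> cdom X f = cdom X g \<Longrightarrow> cdom X (cpair X f g) = cdom X f"
  and pair_cod[simp]: "ar f \<Longrightarrow> ar g \<Longrightarrow> cdom X f = cdom X g \<Longrightarrow> ccod X (cpair X f g) = cprod X (ccod X f) (ccod X g)"
  using pair_ty by auto

lemma pair_pi0[simp]: "ar f \<Longrightarrow> ar g \<Longrightarrow> cdom X f = cdom X g \<Longrightarrow> ccod X f = A \<Longrightarrow> ccod X g = B \<Longrightarrow>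
    ccomp X (cpair X f g) (cpi0 X A B) = f"
  and pair_pi1[simp]: "ar f \<Longrightarrow> ar g \<Longrightarrow> cdom X f = cdom X g \<Longrightarrow> ccod X f = A \<Longrightarrow> ccod X g = B \<Longrightarrow>
    ccomp X (cpair X f g) (cpi1 X A B) = g"
  using pair_ty by auto

lemma pair_pi0'[simp]: "ar f \<Longrightarrow> ar g \<Longrightarrow> cdom X f = cdom X g \<Longrightarrow> ccod X f = A \<Longrightarrow> ccod X g = B \<Longrightarrow>
    ar h \<Longrightarrow> cdom X h = A \<Longrightarrow> ccomp X (cpair X f g) (ccomp X (cpi0 X A B) h) = ccomp X f h"
proof -
  assume a: "ar f" "ar g" "cdom X f = cdom X g" "ccod X f = A" "ccod X g = B" "ar h" "cdom X h = A"
  have "ccomp X (cpair X f g) (ccomp X (cpi0 X A B) h) = ccomp X (ccomp X (cpair X f g) (cpi0 X A B)) h"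
    using a by (subst assoc) auto
  thus ?thesis using a by simp
qed

lemma pair_pi1'[simp]: "ar f \<Longrightarrow> ar g \<Longrightarrow> cdom X f = cdom X g \<Longrightarrow> ccod X f = A \<Longrightarrow> ccod X g = B \<Longrightarrow>
    ar h \<Longrightarrow> cdom X h = B \<Longrightarrow> ccomp X (cpair X f g) (ccomp X (cpi1 X A B) h) = ccomp X g h"
proof -
  assume a: "ar f" "ar g" "cdom X f = cdom X g" "ccod X f = A" "ccod X g = B" "ar h" "cdom X h = B"
  have "ccomp X (cpair X f g) (ccomp X (cpi1 X A B) h) = ccomp X (ccomp X (cpair X f g) (cpi1 X A B)) h"
    using a by (subst assoc) auto
  thus ?thesis using a by simp
qed

lemma pair_eta: "ar h \<Longrightarrow> ccod X h = cprod X A B \<Longrightarrow> A \<in> Ob \<Longrightarrow> B \<in> Ob \<Longrightarrow>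
   h = cpair X (ccomp X h (cpi0 X A B)) (ccomp X h (cpi1 X A B))"
  using pair_surj[rule_format, of A B "cdom X h" h] by (simp add: hom_iff)

lemma pair_ext: "ar u \<Longrightarrow> ar v \<Longrightarrow> ccod X u = cprod X A B \<Longrightarrow> ccod X v = cprod X A B \<Longrightarrow> A \<in> Ob \<Longrightarrow> B \<in> Ob \<Longrightarrow>
   ccomp X u (cpi0 X A B) = ccomp X v (cpi0 X A B) \<Longrightarrow> ccomp X u (cpi1 X A B) = ccomp X v (cpi1 X A B) \<Longrightarrow> u = v"
  by (metis pair_eta)

lemma proj_add: "A \<in> Ob \<Longrightarrow> B \<in> Ob \<Longrightarrow> ar f \<Longrightarrow> ar g \<Longrightarrow> cdom X f = cdom X g \<Longrightarrow> ccod X f = cprod X A B \<Longrightarrow> ccod X g = cprod X A B \<Longrightarrow>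
   ccomp X (cadd X f g) (cpi0 X A B) = cadd X (ccomp X f (cpi0 X A B)) (ccomp X g (cpi0 X A B))
 \<and> ccomp X (cadd X f g) (cpi1 X A B) = cadd X (ccomp X f (cpi1 X A B)) (ccomp X g (cpi1 X A B))"
  using proj_additive[rule_format, of A B "cdom X f" f g] by (simp add: hom_iff)

lemma proj_zero: "A \<in> Ob \<Longrightarrow> B \<in> Ob \<Longrightarrow> C \<in> Ob \<Longrightarrow>
   ccomp X (czero X C (cprod X A B)) (cpi0 X A B) = czero X C A
 \<and> ccomp X (czero X C (cprod X A B)) (cpi1 X A B) = czero X C B"
  using proj_zero_hom[rule_format, of A B C] by simp

lemma comp_pair[simp]: "ar h \<Longrightarrow> ar f \<Longrightarrow> ar g \<Longrightarrow> ccod X h = cdom X f \<Longrightarrow> cdom X f = cdom X g \<Longrightarrow>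
  ccomp X h (cpair X f g) = cpair X (ccomp X h f) (ccomp X h g)"
  by (rule pair_ext[of _ _ "ccod X f" "ccod X g"]) auto

lemma pair_add: "ar a \<Longrightarrow> ar b \<Longrightarrow> ar c \<Longrightarrow> ar d \<Longrightarrow> cdom X a = cdom X b \<Longrightarrow> cdom X c = cdom X a \<Longrightarrow>
   cdom X d = cdom X a \<Longrightarrow> ccod X c = ccod X a \<Longrightarrow> ccod X d = ccod X b \<Longrightarrow>
   cadd X (cpair X a b) (cpair X c d) = cpair X (cadd X a c) (cadd X b d)"
  by (rule pair_ext[of _ _ "ccod X a" "ccod X b"]) (auto simp: proj_add)

lemma zero_prod: "A \<in> Ob \<Longrightarrow> B \<in> Ob \<Longrightarrow> C \<in> Ob \<Longrightarrow>
   czero X C (cprod X A B) = cpair X (czero X C A) (czero X C B)"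
  by (rule pair_ext[of _ _ A B]) (auto simp: proj_zero)

lemma pair_zero_zero[simp]: "A \<in> Ob \<Longrightarrow> B \<in> Ob \<Longrightarrow> C \<in> Ob \<Longrightarrow>
   cpair X (czero X C A) (czero X C B) = czero X C (cprod X A B)"
  by (simp add: zero_prod)

lemma pair_proj[simp]: "A \<in> Ob \<Longrightarrow> B \<in> Ob \<Longrightarrow> cpair X (cpi0 X A B) (cpi1 X A B) = cid X (cprod X A B)"
  by (rule pair_ext[of _ _ A B]) auto

lemma pair_comp_proj[simp]: "ar h \<Longrightarrow> ccod X h = cprod X A B \<Longrightarrow> A \<in> Ob \<Longrightarrow> B \<in> Ob \<Longrightarrow>
   cpair X (ccomp X h (cpi0 X A B)) (ccomp X h (cpi1 X A B)) = h"
  using pair_eta by metis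

section \<open>Additive maps\<close>

definition additive :: "'a \<Rightarrow> bool" where
  "additive k \<longleftrightarrow> ar k \<and>
     (\<forall>f g. ar f \<longrightarrow> ar g \<longrightarrow> cdom X f = cdom X g \<longrightarrow> ccod X f = cdom X k \<longrightarrow> ccod X g = cdom X k \<longrightarrow>
        ccomp X (cadd X f g) k = cadd X (ccomp X f k) (ccomp X g k))
   \<and> (\<forall>C\<in>Ob. ccomp X (czero X C (cdom X k)) k = czero X C (ccod X k))"

lemma additive_ar: "additive k \<Longrightarrow> ar k"
  unfolding additive_def by blast

lemma add_comp[simp]: "additive k \<Longrightarrow> ar f \<Longrightarrow> ar g \<Longrightarrow> cdom X f = cdom X g \<Longrightarrow> ccod X f = cdom X k \<Longrightarrow> ccod X g = cdom X k \<Longrightarrow>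
        ccomp X (cadd X f g) k = cadd X (ccomp X f k) (ccomp X g k)"
  unfolding additive_def by blast

lemma zero_comp[simp]: "additive k \<Longrightarrow> C \<in> Ob \<Longrightarrow> cdom X k = B \<Longrightarrow> ccomp X (czero X C B) k = czero X C (ccod X k)"
  unfolding additive_def by blast

lemma add_comp'[simp]: "additive k \<Longrightarrow> ar f \<Longrightarrow> ar g \<Longrightarrow> ar h \<Longrightarrow> cdom X f = cdom X g \<Longrightarrow> ccod X f = cdom X k \<Longrightarrow> ccod X g = cdom X k \<Longrightarrow>
        ccod X k = cdom X h \<Longrightarrow>
        ccomp X (cadd X f g) (ccomp X k h) = ccomp X (cadd X (ccomp X f k) (ccomp X g k)) h"
  by (subst assoc[symmetric]) (auto simp: additive_ar)

lemma zero_comp'[simp]: "additive k \<Longrightarrow> C \<in> Ob \<Longrightarrow> cdom X k = B \<Longrightarrow> ar h \<Longrightarrow> ccod X k = cdom X h \<Longrightarrow>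
   ccomp X (czero X C B) (ccomp X k h) = ccomp X (czero X C (ccod X k)) h"
  by (subst assoc[symmetric]) (auto simp: additive_ar)

lemma additiveI:
  assumes "ar k"
    and "\<And>f g. ar f \<Longrightarrow> ar g \<Longrightarrow> cdom X f = cdom X g \<Longrightarrow> ccod X f = cdom X k \<Longrightarrow> ccod X g = cdom X k \<Longrightarrow>
        ccomp X (cadd X f g) k = cadd X (ccomp X f k) (ccomp X g k)"
    and "\<And>C. C \<in> Ob \<Longrightarrow> ccomp X (czero X C (cdom X k)) k = czero X C (ccod X k)"
  shows "additive k"
  using assms unfolding additive_def by blast

lemma additive_pi0[simp]: "A \<in> Ob \<Longrightarrow> B \<in> Ob \<Longrightarrow> additive (cpi0 X A B)"
  by (rule additiveI) (auto simp: proj_add proj_zero)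

lemma additive_pi1[simp]: "A \<in> Ob \<Longrightarrow> B \<in> Ob \<Longrightarrow> additive (cpi1 X A B)"
  by (rule additiveI) (auto simp: proj_add proj_zero)

lemma additive_id[simp]: "A \<in> Ob \<Longrightarrow> additive (cid X A)"
  by (rule additiveI) auto

lemma additive_comp[simp]: "additive k \<Longrightarrow> additive h \<Longrightarrow> ccod X k = cdom X h \<Longrightarrow> additive (ccomp X k h)"
  by (rule additiveI) (auto simp: additive_ar)

lemma additive_pair[simp]: "additive a \<Longrightarrow> additive b \<Longrightarrow> cdom X a = cdom X b \<Longrightarrow> additive (cpair X a b)"
  by (rule additiveI) (auto simp: additive_ar pair_add)

lemma cross_ty: "ar h \<Longrightarrow> ar k \<Longrightarrow> ar (cross X h k) \<and> cdom X (cross X h k) = cprod X (cdom X h) (cdom X k)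
  \<and> ccod X (cross X h k) = cprod X (ccod X h) (ccod X k)"
  unfolding cross_def by simp

lemma cross_ar[simp]: "ar h \<Longrightarrow> ar k \<Longrightarrow> ar (cross X h k)"
  and cross_dom[simp]: "ar h \<Longrightarrow> ar k \<Longrightarrow> cdom X (cross X h k) = cprod X (cdom X h) (cdom X k)"
  and cross_cod[simp]: "ar h \<Longrightarrow> ar k \<Longrightarrow> ccod X (cross X h k) = cprod X (ccod X h) (ccod X k)"
  using cross_ty by auto

lemma cross_pi0[simp]: "ar h \<Longrightarrow> ar k \<Longrightarrow> ccod X h = A \<Longrightarrow> ccod X k = B \<Longrightarrow>
   ccomp X (cross X h k) (cpi0 X A B) = ccomp X (cpi0 X (cdom X h) (cdom X k)) h"
  and cross_pi1[simp]: "ar h \<Longrightarrow> ar k \<Longrightarrow> ccod X h = A \<Longrightarrow> ccod X k = B \<Longrightarrow>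
   ccomp X (cross X h k) (cpi1 X A B) = ccomp X (cpi1 X (cdom X h) (cdom X k)) k"
  unfolding cross_def by auto

lemma cross_pi0'[simp]: "ar h \<Longrightarrow> ar k \<Longrightarrow> ccod X h = A \<Longrightarrow> ccod X k = B \<Longrightarrow> ar u \<Longrightarrow> cdom X u = A \<Longrightarrow>
   ccomp X (cross X h k) (ccomp X (cpi0 X A B) u) = ccomp X (cpi0 X (cdom X h) (cdom X k)) (ccomp X h u)"
  and cross_pi1'[simp]: "ar h \<Longrightarrow> ar k \<Longrightarrow> ccod X h = A \<Longrightarrow> ccod X k = B \<Longrightarrow> ar u \<Longrightarrow> cdom X u = B \<Longrightarrow>
   ccomp X (cross X h k) (ccomp X (cpi1 X A B) u) = ccomp X (cpi1 X (cdom X h) (cdom X k)) (ccomp X k u)"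
  unfolding cross_def by auto

lemma pair_cross[simp]: "ar f \<Longrightarrow> ar g \<Longrightarrow> ar h \<Longrightarrow> ar k \<Longrightarrow> cdom X f = cdom X g \<Longrightarrow> ccod X f = cdom X h \<Longrightarrow> ccod X g = cdom X k \<Longrightarrow>
   ccomp X (cpair X f g) (cross X h k) = cpair X (ccomp X f h) (ccomp X g k)"
  unfolding cross_def by simp

lemma cross_cross[simp]: "ar a \<Longrightarrow> ar b \<Longrightarrow> ar c \<Longrightarrow> ar d \<Longrightarrow> ccod X a = cdom X c \<Longrightarrow> ccod X b = cdom X d \<Longrightarrow>
   ccomp X (cross X a b) (cross X c d) = cross X (ccomp X a c) (ccomp X b d)"
  unfolding cross_def[of X a b] by (simp add: cross_def)

lemma cross_id[simp]: "A \<in> Ob \<Longrightarrow> B \<in> Ob \<Longrightarrow> cross X (cid X A) (cid X B) = cid X (cprod X A B)"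
  unfolding cross_def by simp

lemma additive_cross[simp]: "additive h \<Longrightarrow> additive k \<Longrightarrow> additive (cross X h k)"
  unfolding cross_def by (simp add: additive_ar)

section \<open>Pre-D-sequences\<close>

lemma Pobj_eq[simp]: "Pobj X A = cprod X A A"
  by (simp add: Pobj_def)

lemma Pn_0[simp]: "Pn X 0 A = A"
  by (simp add: Pn_def)

lemma Pn_Suc[simp]: "Pn X (Suc n) A = cprod X (Pn X n A) (Pn X n A)"
  by (simp add: Pn_def)

lemma Pn_add[simp]: "Pn X m (Pn X n A) = Pn X (m + n) A"
  by (simp add: Pn_def funpow_add)

lemma Pn_prod[simp]: "Pn X n (cprod X A A) = cprod X (Pn X n A) (Pn X n A)"
proof -
  have "Pn X n (cprod X A A) = Pn X n (Pn X 1 A)" by simp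
  also have "\<dots> = Pn X (Suc n) A" by (simp only: Pn_add) simp
  finally show ?thesis by simp
qed

lemma Pn_ob[simp]: "A \<in> Ob \<Longrightarrow> Pn X n A \<in> Ob"
  by (induct n) auto

lemma Pnarr_0[simp]: "Pnarr X 0 h = h"
  by (simp add: Pnarr_def)

lemma Pnarr_Suc[simp]: "Pnarr X (Suc n) h = cross X (Pnarr X n h) (Pnarr X n h)"
  by (simp add: Pnarr_def Parr_def)

lemma Pnarr_add[simp]: "Pnarr X m (Pnarr X n h) = Pnarr X (m + n) h"
  by (simp add: Pnarr_def funpow_add)

lemma Pnarr_cross[simp]: "Pnarr X n (cross X h h) = cross X (Pnarr X n h) (Pnarr X n h)"
proof -
  have "Pnarr X n (cross X h h) = Pnarr X n (Pnarr X 1 h)" by simp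
  also have "\<dots> = Pnarr X (Suc n) h" by (simp only: Pnarr_add) simp
  finally show ?thesis by simp
qed

lemma Pnarr_ty: "ar h \<Longrightarrow> ar (Pnarr X n h) \<and> cdom X (Pnarr X n h) = Pn X n (cdom X h) \<and> ccod X (Pnarr X n h) = Pn X n (ccod X h)"
  by (induct n) auto

lemma Pnarr_ar[simp]: "ar h \<Longrightarrow> ar (Pnarr X n h)"
  and Pnarr_dom[simp]: "ar h \<Longrightarrow> cdom X (Pnarr X n h) = Pn X n (cdom X h)"
  and Pnarr_cod[simp]: "ar h \<Longrightarrow> ccod X (Pnarr X n h) = Pn X n (ccod X h)"
  using Pnarr_ty by auto

lemma Pnarr_comp[simp]: "ar h \<Longrightarrow> ar k \<Longrightarrow> ccod X h = cdom X k \<Longrightarrow>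
   Pnarr X n (ccomp X h k) = ccomp X (Pnarr X n h) (Pnarr X n k)"
  by (induct n) auto

lemma Pnarr_id[simp]: "A \<in> Ob \<Longrightarrow> Pnarr X n (cid X A) = cid X (Pn X n A)"
  by (induct n) auto

lemma additive_Pnarr[simp]: "additive h \<Longrightarrow> additive (Pnarr X n h)"
  by (induct n) auto

lemma iseq_ty: "A \<in> Ob \<Longrightarrow> ar (iseq X A n) \<and> cdom X (iseq X A n) = Pn X n A \<and> ccod X (iseq X A n) = A"
  by (induct n) auto

lemma iseq_ar[simp]: "A \<in> Ob \<Longrightarrow> ar (iseq X A n)"
  and iseq_dom[simp]: "A \<in> Ob \<Longrightarrow> cdom X (iseq X A n) = Pn X n A"
  and iseq_cod[simp]: "A \<in> Ob \<Longrightarrow> ccod X (iseq X A n) = A"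
  using iseq_ty by auto

lemma additive_iseq[simp]: "A \<in> Ob \<Longrightarrow> additive (iseq X A n)"
  by (induct n) auto

lemma iseq_nat: "ar h \<Longrightarrow> ccomp X (Pnarr X n h) (iseq X (ccod X h) n) = ccomp X (iseq X (cdom X h) n) h"
proof (induct n)
  case 0 then show ?case by simp
next
  case (Suc n)
  have "ccomp X (Pnarr X (Suc n) h) (iseq X (ccod X h) (Suc n))
      = ccomp X (cpi1 X (Pn X n (cdom X h)) (Pn X n (cdom X h))) (ccomp X (Pnarr X n h) (iseq X (ccod X h) n))"
    using Suc by simp
  also have "\<dots> = ccomp X (cpi1 X (Pn X n (cdom X h)) (Pn X n (cdom X h))) (ccomp X (iseq X (cdom X h) n) h)"
    using Suc by simp
  also have "\<dots> = ccomp X (iseq X (cdom X h) (Suc n)) h" using Suc by simp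
  finally show ?case .
qed

lemma iseq_nat'[simp]: "ar h \<Longrightarrow> ccod X h = B \<Longrightarrow> ccomp X (Pnarr X n h) (iseq X B n) = ccomp X (iseq X (cdom X h) n) h"
  using iseq_nat by blast

lemma iseq_split: "A \<in> Ob \<Longrightarrow> iseq X A (j + m) = ccomp X (iseq X (Pn X m A) j) (iseq X A m)"
  by (induct j) simp_all

lemma pre_dseq_ends:
  assumes "\<And>n. ar (f n) \<and> cdom X (f n) = Pn X n A \<and> ccod X (f n) = B"
  shows "pre_dseq X f" "sdom X f = A" "scod X f = B"
  using assms[of 0] assms unfolding pre_dseq_def hom_def sdom_def scod_def by auto

lemma pre_dseq_ar[simp]: "pre_dseq X f \<Longrightarrow> ar (f n)"
  and pre_dseq_dom[simp]: "pre_dseq X f \<Longrightarrow> cdom X (f n) = Pn X n (sdom X f)"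
  and pre_dseq_cod[simp]: "pre_dseq X f \<Longrightarrow> ccod X (f n) = scod X f"
  unfolding pre_dseq_def hom_def by auto

lemma sdom_ob[simp]: "pre_dseq X f \<Longrightarrow> sdom X f \<in> Ob"
  and scod_ob[simp]: "pre_dseq X f \<Longrightarrow> scod X f \<in> Ob"
  using pre_dseq_ar[of f 0] pre_dseq_dom[of f 0] pre_dseq_cod[of f 0] by (metis Pn_0 dom_ob, metis cod_ob)

lemma lact_app: "lact X h f n = ccomp X (Pnarr X n h) (f n)"
  by (simp add: lact_def)

lemma ract_app: "ract X f k n = ccomp X (f n) k"
  by (simp add: ract_def)

lemma sadd_app: "sadd X f g n = cadd X (f n) (g n)"
  by (simp add: sadd_def)

lemma szero_app: "szero X A B n = czero X (Pn X n A) B"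
  by (simp add: szero_def)

lemma spair_app: "spair X f g n = cpair X (f n) (g n)"
  by (simp add: spair_def)

lemma tan_app: "tan X f n = cpair X (ccomp X (Pnarr X n (cpi0 X (sdom X f) (sdom X f))) (f n)) (f (Suc n))"
  by (simp add: tan_def)

lemma scomp_app: "scomp X f g n = ccomp X ((tan X ^^ n) f 0) (g n)"
  by (simp add: scomp_def)

lemmas app_simps = Dseq_app Dpow_app lact_app ract_app sadd_app szero_app spair_app tan_app scomp_app

lemma pre_dseq_Dseq[simp]: "pre_dseq X f \<Longrightarrow> pre_dseq X (Dseq f)"
  and sdom_Dseq[simp]: "pre_dseq X f \<Longrightarrow> sdom X (Dseq f) = cprod X (sdom X f) (sdom X f)"
  and scod_Dseq[simp]: "pre_dseq X f \<Longrightarrow> scod X (Dseq f) = scod X f"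
  using pre_dseq_ends[of "Dseq f" "cprod X (sdom X f) (sdom X f)" "scod X f"] by (simp_all add: app_simps)

lemma pre_dseq_Dpow[simp]: "pre_dseq X f \<Longrightarrow> pre_dseq X ((Dseq ^^ k) f)"
  and sdom_Dpow[simp]: "pre_dseq X f \<Longrightarrow> sdom X ((Dseq ^^ k) f) = Pn X k (sdom X f)"
  and scod_Dpow[simp]: "pre_dseq X f \<Longrightarrow> scod X ((Dseq ^^ k) f) = scod X f"
  using pre_dseq_ends[of "(Dseq ^^ k) f" "Pn X k (sdom X f)" "scod X f"] by (simp_all add: app_simps)

lemma pre_dseq_lact[simp]: "pre_dseq X f \<Longrightarrow> ar h \<Longrightarrow> ccod X h = sdom X f \<Longrightarrow> pre_dseq X (lact X h f)"
  and sdom_lact[simp]: "pre_dseq X f \<Longrightarrow> ar h \<Longrightarrow> ccod X h = sdom X f \<Longrightarrow> sdom X (lact X h f) = cdom X h"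
  and scod_lact[simp]: "pre_dseq X f \<Longrightarrow> ar h \<Longrightarrow> ccod X h = sdom X f \<Longrightarrow> scod X (lact X h f) = scod X f"
  using pre_dseq_ends[of "lact X h f" "cdom X h" "scod X f"] by (simp_all add: app_simps)

lemma pre_dseq_ract[simp]: "pre_dseq X f \<Longrightarrow> ar k \<Longrightarrow> cdom X k = scod X f \<Longrightarrow> pre_dseq X (ract X f k)"
  and sdom_ract[simp]: "pre_dseq X f \<Longrightarrow> ar k \<Longrightarrow> cdom X k = scod X f \<Longrightarrow> sdom X (ract X f k) = sdom X f"
  and scod_ract[simp]: "pre_dseq X f \<Longrightarrow> ar k \<Longrightarrow> cdom X k = scod X f \<Longrightarrow> scod X (ract X f k) = ccod X k"
  using pre_dseq_ends[of "ract X f k" "sdom X f" "ccod X k"] by (simp_all add: app_simps)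

lemma pre_dseq_sadd[simp]: "pre_dseq X f \<Longrightarrow> pre_dseq X g \<Longrightarrow> sdom X f = sdom X g \<Longrightarrow> scod X f = scod X g \<Longrightarrow> pre_dseq X (sadd X f g)"
  and sdom_sadd[simp]: "pre_dseq X f \<Longrightarrow> pre_dseq X g \<Longrightarrow> sdom X f = sdom X g \<Longrightarrow> scod X f = scod X g \<Longrightarrow> sdom X (sadd X f g) = sdom X f"
  and scod_sadd[simp]: "pre_dseq X f \<Longrightarrow> pre_dseq X g \<Longrightarrow> sdom X f = sdom X g \<Longrightarrow> scod X f = scod X g \<Longrightarrow> scod X (sadd X f g) = scod X f"
  using pre_dseq_ends[of "sadd X f g" "sdom X f" "scod X f"] by (simp_all add: app_simps)

lemma pre_dseq_szero[simp]: "A \<in> Ob \<Longrightarrow> B \<in> Ob \<Longrightarrow> pre_dseq X (szero X A B)"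
  and sdom_szero[simp]: "A \<in> Ob \<Longrightarrow> B \<in> Ob \<Longrightarrow> sdom X (szero X A B) = A"
  and scod_szero[simp]: "A \<in> Ob \<Longrightarrow> B \<in> Ob \<Longrightarrow> scod X (szero X A B) = B"
  using pre_dseq_ends[of "szero X A B" "A" "B"] by (simp_all add: app_simps)

lemma pre_dseq_spair[simp]: "pre_dseq X f \<Longrightarrow> pre_dseq X g \<Longrightarrow> sdom X f = sdom X g \<Longrightarrow> pre_dseq X (spair X f g)"
  and sdom_spair[simp]: "pre_dseq X f \<Longrightarrow> pre_dseq X g \<Longrightarrow> sdom X f = sdom X g \<Longrightarrow> sdom X (spair X f g) = sdom X f"
  and scod_spair[simp]: "pre_dseq X f \<Longrightarrow> pre_dseq X g \<Longrightarrow> sdom X f = sdom X g \<Longrightarrow> scod X (spair X f g) = cprod X (scod X f) (scod X g)"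
  using pre_dseq_ends[of "spair X f g" "sdom X f" "cprod X (scod X f) (scod X g)"] by (simp_all add: app_simps)

lemma pre_dseq_iseq[simp]: "A \<in> Ob \<Longrightarrow> pre_dseq X (iseq X A)"
  and sdom_iseq[simp]: "A \<in> Ob \<Longrightarrow> sdom X (iseq X A) = A"
  and scod_iseq[simp]: "A \<in> Ob \<Longrightarrow> scod X (iseq X A) = A"
  using pre_dseq_ends[of "iseq X A" "A" "A"] by (simp_all del: pre_dseq_dom pre_dseq_cod)

lemma pre_dseq_tan[simp]: "pre_dseq X f \<Longrightarrow> pre_dseq X (tan X f)"
  and sdom_tan[simp]: "pre_dseq X f \<Longrightarrow> sdom X (tan X f) = cprod X (sdom X f) (sdom X f)"
  and scod_tan[simp]: "pre_dseq X f \<Longrightarrow> scod X (tan X f) = cprod X (scod X f) (scod X f)"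
  using pre_dseq_ends[of "tan X f" "cprod X (sdom X f) (sdom X f)" "cprod X (scod X f) (scod X f)"] by (simp_all add: app_simps)

lemma pre_dseq_tanpow[simp]: "pre_dseq X f \<Longrightarrow> pre_dseq X ((tan X ^^ k) f)"
  and sdom_tanpow[simp]: "pre_dseq X f \<Longrightarrow> sdom X ((tan X ^^ k) f) = Pn X k (sdom X f)"
  and scod_tanpow[simp]: "pre_dseq X f \<Longrightarrow> scod X ((tan X ^^ k) f) = Pn X k (scod X f)"
  by (induct k) auto

lemma pre_dseq_scomp[simp]: "pre_dseq X f \<Longrightarrow> pre_dseq X g \<Longrightarrow> scod X f = sdom X g \<Longrightarrow> pre_dseq X (scomp X f g)"
  and sdom_scomp[simp]: "pre_dseq X f \<Longrightarrow> pre_dseq X g \<Longrightarrow> scod X f = sdom X g \<Longrightarrow> sdom X (scomp X f g) = sdom X f"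
  and scod_scomp[simp]: "pre_dseq X f \<Longrightarrow> pre_dseq X g \<Longrightarrow> scod X f = sdom X g \<Longrightarrow> scod X (scomp X f g) = scod X g"
  using pre_dseq_ends[of "scomp X f g" "sdom X f" "scod X g"] by (simp_all add: app_simps)

lemma lact_lact: "pre_dseq X f \<Longrightarrow> ar h \<Longrightarrow> ar k \<Longrightarrow> ccod X h = cdom X k \<Longrightarrow> ccod X k = sdom X f \<Longrightarrow>
  lact X h (lact X k f) = lact X (ccomp X h k) f"
  by (rule ext) (simp add: app_simps)

lemma lact_id[simp]: "pre_dseq X f \<Longrightarrow> A = sdom X f \<Longrightarrow> lact X (cid X A) f = f"
  by (rule ext) (simp add: app_simps)

lemma lact_sadd: "pre_dseq X f \<Longrightarrow> pre_dseq X g \<Longrightarrow> sdom X f = sdom X g \<Longrightarrow> scod X f = scod X g \<Longrightarrow> ar h \<Longrightarrow> ccod X h = sdom X f \<Longrightarrow>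
  lact X h (sadd X f g) = sadd X (lact X h f) (lact X h g)"
  by (rule ext) (simp add: app_simps)

lemma lact_szero[simp]: "A \<in> Ob \<Longrightarrow> B \<in> Ob \<Longrightarrow> ar h \<Longrightarrow> ccod X h = A \<Longrightarrow>
  lact X h (szero X A B) = szero X (cdom X h) B"
  by (rule ext) (simp add: app_simps)

lemma lact_spair: "pre_dseq X f \<Longrightarrow> pre_dseq X g \<Longrightarrow> sdom X f = sdom X g \<Longrightarrow> ar h \<Longrightarrow> ccod X h = sdom X f \<Longrightarrow>
  lact X h (spair X f g) = spair X (lact X h f) (lact X h g)"
  by (rule ext) (simp add: app_simps)

lemma lact_ract: "pre_dseq X f \<Longrightarrow> ar h \<Longrightarrow> ccod X h = sdom X f \<Longrightarrow> ar k \<Longrightarrow> cdom X k = scod X f \<Longrightarrow>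
  lact X h (ract X f k) = ract X (lact X h f) k"
  by (rule ext) (simp add: app_simps)

lemma ract_ract: "pre_dseq X f \<Longrightarrow> ar k \<Longrightarrow> ar k' \<Longrightarrow> cdom X k = scod X f \<Longrightarrow> ccod X k = cdom X k' \<Longrightarrow>
  ract X (ract X f k) k' = ract X f (ccomp X k k')"
  by (rule ext) (simp add: app_simps)

lemma ract_pair: "pre_dseq X f \<Longrightarrow> ar a \<Longrightarrow> ar b \<Longrightarrow> cdom X a = scod X f \<Longrightarrow> cdom X b = scod X f \<Longrightarrow>
  ract X f (cpair X a b) = spair X (ract X f a) (ract X f b)"
  by (rule ext) (simp add: app_simps)

lemma ract_spair_cross: "pre_dseq X f \<Longrightarrow> pre_dseq X g \<Longrightarrow> sdom X f = sdom X g \<Longrightarrow> ar h \<Longrightarrow> ar k \<Longrightarrow> cdom X h = scod X f \<Longrightarrow> cdom X k = scod X g \<Longrightarrow>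
  ract X (spair X f g) (cross X h k) = spair X (ract X f h) (ract X g k)"
  by (rule ext) (simp add: app_simps)

lemma ract_spair_pi0[simp]: "pre_dseq X f \<Longrightarrow> pre_dseq X g \<Longrightarrow> sdom X f = sdom X g \<Longrightarrow> A = scod X f \<Longrightarrow> B = scod X g \<Longrightarrow>
  ract X (spair X f g) (cpi0 X A B) = f"
  and ract_spair_pi1[simp]: "pre_dseq X f \<Longrightarrow> pre_dseq X g \<Longrightarrow> sdom X f = sdom X g \<Longrightarrow> A = scod X f \<Longrightarrow> B = scod X g \<Longrightarrow>
  ract X (spair X f g) (cpi1 X A B) = g"
  by (rule ext, simp add: app_simps)+

lemma ract_id[simp]: "pre_dseq X f \<Longrightarrow> B = scod X f \<Longrightarrow> ract X f (cid X B) = f"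
  by (rule ext) (simp add: app_simps)

lemma ract_sadd: "pre_dseq X f \<Longrightarrow> ar a \<Longrightarrow> ar b \<Longrightarrow> cdom X a = scod X f \<Longrightarrow> cdom X b = scod X f \<Longrightarrow> ccod X a = ccod X b \<Longrightarrow>
  ract X f (cadd X a b) = sadd X (ract X f a) (ract X f b)"
  by (rule ext) (simp add: app_simps)

lemma ract_zero: "pre_dseq X f \<Longrightarrow> C \<in> Ob \<Longrightarrow> B = scod X f \<Longrightarrow> ract X f (czero X B C) = szero X (sdom X f) C"
  by (rule ext) (simp add: app_simps)

lemma Dseq_lact: "pre_dseq X f \<Longrightarrow> ar h \<Longrightarrow> ccod X h = sdom X f \<Longrightarrow> Dseq (lact X h f) = lact X (cross X h h) (Dseq f)"
  by (rule ext) (simp add: app_simps)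

lemma Dseq_ract: "Dseq (ract X f k) = ract X (Dseq f) k"
  by (rule ext) (simp add: app_simps)

lemma Dseq_sadd: "Dseq (sadd X f g) = sadd X (Dseq f) (Dseq g)"
  by (rule ext) (simp add: app_simps)

lemma Dseq_spair: "Dseq (spair X f g) = spair X (Dseq f) (Dseq g)"
  by (rule ext) (simp add: app_simps)

lemma Dseq_szero: "Dseq (szero X A B) = szero X (cprod X A A) B"
  by (rule ext) (simp add: app_simps)

lemma Dpow_lact: "pre_dseq X f \<Longrightarrow> ar h \<Longrightarrow> ccod X h = sdom X f \<Longrightarrow> (Dseq ^^ m) (lact X h f) = lact X (Pnarr X m h) ((Dseq ^^ m) f)"
  by (rule ext) (simp add: app_simps)

lemma Dpow_ract: "(Dseq ^^ m) (ract X f k) = ract X ((Dseq ^^ m) f) k"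
  by (rule ext) (simp add: app_simps)

lemma Dpow_sadd: "(Dseq ^^ m) (sadd X f g) = sadd X ((Dseq ^^ m) f) ((Dseq ^^ m) g)"
  by (rule ext) (simp add: app_simps)

lemma Dpow_spair: "(Dseq ^^ m) (spair X f g) = spair X ((Dseq ^^ m) f) ((Dseq ^^ m) g)"
  by (rule ext) (simp add: app_simps)

lemma Dpow_szero: "(Dseq ^^ m) (szero X A B) = szero X (Pn X m A) B"
  by (rule ext) (simp add: app_simps)

lemma Dpow_Dpow: "(Dseq ^^ m) ((Dseq ^^ k) f) = (Dseq ^^ (m + k)) f"
  by (simp add: funpow_add)

section \<open>Tangent and composition\<close>

lemma tan_spair: "pre_dseq X f \<Longrightarrow> tan X f = spair X (lact X (cpi0 X (sdom X f) (sdom X f)) f) (Dseq f)"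
  by (rule ext) (simp add: app_simps)

lemma tan_ract: "pre_dseq X f \<Longrightarrow> ar k \<Longrightarrow> cdom X k = scod X f \<Longrightarrow> tan X (ract X f k) = ract X (tan X f) (cross X k k)"
  by (rule ext) (simp add: app_simps)

lemma Pnarr_pi0_natural: "ar h \<Longrightarrow>
  ccomp X (cross X (Pnarr X n h) (Pnarr X n h)) (Pnarr X n (cpi0 X (ccod X h) (ccod X h)))
  = ccomp X (Pnarr X n (cpi0 X (cdom X h) (cdom X h))) (Pnarr X n h)"
  using Pnarr_comp[of "cross X h h" "cpi0 X (ccod X h) (ccod X h)" n] by simp

lemma Pnarr_pi0_natural_comp[simp]: "ar h \<Longrightarrow> ar u \<Longrightarrow> cdom X u = Pn X n (ccod X h) \<Longrightarrow>
  ccomp X (cross X (Pnarr X n h) (Pnarr X n h)) (ccomp X (Pnarr X n (cpi0 X (ccod X h) (ccod X h))) u)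
  = ccomp X (Pnarr X n (cpi0 X (cdom X h) (cdom X h))) (ccomp X (Pnarr X n h) u)"
  by (simp del: assoc add: assoc[symmetric] Pnarr_pi0_natural)

lemma tan_lact: "pre_dseq X f \<Longrightarrow> ar h \<Longrightarrow> ccod X h = sdom X f \<Longrightarrow> tan X (lact X h f) = lact X (cross X h h) (tan X f)"
proof (rule ext)
  fix n assume f: "pre_dseq X f" "ar h" "ccod X h = sdom X f"
  have "ccomp X (cross X (Pnarr X n h) (Pnarr X n h)) (ccomp X (Pnarr X n (cpi0 X (sdom X f) (sdom X f))) (f n))
     = ccomp X (Pnarr X n (cpi0 X (cdom X h) (cdom X h))) (ccomp X (Pnarr X n h) (f n))"
    using Pnarr_pi0_natural_comp[of h "f n" n] f by simp
  thus "tan X (lact X h f) n = lact X (cross X h h) (tan X f) n"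
    using f by (simp add: app_simps)
qed

lemma tan_pi0: "pre_dseq X f \<Longrightarrow> A = sdom X f \<Longrightarrow> B = scod X f \<Longrightarrow> ract X (tan X f) (cpi0 X B B) = lact X (cpi0 X A A) f"
  by (rule ext) (simp add: app_simps)

lemma tanpow_ract: "pre_dseq X f \<Longrightarrow> ar k \<Longrightarrow> cdom X k = scod X f \<Longrightarrow>
   (tan X ^^ n) (ract X f k) = ract X ((tan X ^^ n) f) (Pnarr X n k)"
  by (induct n) (simp_all add: tan_ract)

lemma tanpow_lact: "pre_dseq X f \<Longrightarrow> ar h \<Longrightarrow> ccod X h = sdom X f \<Longrightarrow>
   (tan X ^^ n) (lact X h f) = lact X (Pnarr X n h) ((tan X ^^ n) f)"
  by (induct n) (simp_all add: tan_lact)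

lemma pi1_iseq: "A \<in> Ob \<Longrightarrow> ccomp X (cpi1 X (Pn X n A) (Pn X n A)) (iseq X A n) = ccomp X (iseq X (cprod X A A) n) (cpi1 X A A)"
proof -
  assume A: "A \<in> Ob"
  have "iseq X A (n + 1) = ccomp X (iseq X (Pn X 1 A) n) (iseq X A 1)"
    using iseq_split A by blast
  thus ?thesis using A by simp
qed

lemma tan_iseq: "A \<in> Ob \<Longrightarrow> tan X (iseq X A) = iseq X (cprod X A A)"
proof (rule ext)
  fix n assume A: "A \<in> Ob"
  show "tan X (iseq X A) n = iseq X (cprod X A A) n"
    using A by (simp add: pi1_iseq app_simps)
qed

lemma tanpow_iseq: "A \<in> Ob \<Longrightarrow> (tan X ^^ n) (iseq X A) = iseq X (Pn X n A)"
  by (induct n) (simp_all add: tan_iseq)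

lemma tanpow_iseq0[simp]: "A \<in> Ob \<Longrightarrow> (tan X ^^ n) (iseq X A) 0 = cid X (Pn X n A)"
  by (simp add: tanpow_iseq)

lemma tanpow_iseq_right: "pre_dseq X f \<Longrightarrow> B = scod X f \<Longrightarrow> ccomp X ((tan X ^^ n) f 0) (iseq X B n) = f n"
proof (induct n arbitrary: f B)
  case 0 then show ?case by simp
next
  case (Suc n)
  have e: "iseq X B (Suc n) = ccomp X (iseq X (cprod X B B) n) (cpi1 X B B)" using Suc pi1_iseq[of B n] by simp
  have ih: "ccomp X ((tan X ^^ n) (tan X f) 0) (iseq X (cprod X B B) n) = tan X f n"
    using Suc.hyps[of "tan X f" "cprod X B B"] Suc.prems by (simp del: tan_app)
  have "ccomp X ((tan X ^^ Suc n) f 0) (iseq X B (Suc n))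
      = ccomp X (ccomp X ((tan X ^^ n) (tan X f) 0) (iseq X (cprod X B B) n)) (cpi1 X B B)"
    unfolding e funpow_Suc_right o_def using Suc by (simp del: iseq.simps)
  also have "\<dots> = f (Suc n)" using ih Suc by (simp add: app_simps)
  finally show ?case .
qed

lemma scomp_iseq_right[simp]: "pre_dseq X f \<Longrightarrow> B = scod X f \<Longrightarrow> scomp X f (iseq X B) = f"
  by (rule ext) (simp add: app_simps tanpow_iseq_right)

lemma scomp_lift_right: "pre_dseq X f \<Longrightarrow> B = scod X f \<Longrightarrow> ar k \<Longrightarrow> cdom X k = B \<Longrightarrow> scomp X f (ract X (iseq X B) k) = ract X f k"
proof (rule ext)
  fix n assume f: "pre_dseq X f" "B = scod X f" "ar k" "cdom X k = B"
  have "ccomp X ((tan X ^^ n) f 0) (ccomp X (iseq X B n) k) = ccomp X (ccomp X ((tan X ^^ n) f 0) (iseq X B n)) k"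
    using f by simp
  thus "scomp X f (ract X (iseq X B) k) n = ract X f k n"
    using f by (simp add: tanpow_iseq_right app_simps)
qed

lemma scomp_iseq_left[simp]: "pre_dseq X g \<Longrightarrow> A = sdom X g \<Longrightarrow> scomp X (iseq X A) g = g"
  by (rule ext) (simp add: app_simps)

lemma scomp_lift_left: "pre_dseq X g \<Longrightarrow> A \<in> Ob \<Longrightarrow> ar k \<Longrightarrow> cdom X k = A \<Longrightarrow> ccod X k = sdom X g \<Longrightarrow>
  scomp X (ract X (iseq X A) k) g = lact X k g"
  by (rule ext) (simp add: app_simps tanpow_ract)

lemma scomp_lact: "pre_dseq X f \<Longrightarrow> pre_dseq X g \<Longrightarrow> scod X f = sdom X g \<Longrightarrow> ar h \<Longrightarrow> ccod X h = sdom X f \<Longrightarrow>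
  scomp X (lact X h f) g = lact X h (scomp X f g)"
  by (rule ext) (simp add: app_simps tanpow_lact)

lemma scomp_ract: "pre_dseq X f \<Longrightarrow> pre_dseq X g \<Longrightarrow> ar k \<Longrightarrow> cdom X k = scod X f \<Longrightarrow> ccod X k = sdom X g \<Longrightarrow>
  scomp X (ract X f k) g = scomp X f (lact X k g)"
  by (rule ext) (simp add: app_simps tanpow_ract)

lemma scomp_sadd: "pre_dseq X f \<Longrightarrow> pre_dseq X g \<Longrightarrow> pre_dseq X h \<Longrightarrow> scod X f = sdom X g \<Longrightarrow> sdom X h = sdom X g \<Longrightarrow> scod X h = scod X g \<Longrightarrow>
  scomp X f (sadd X g h) = sadd X (scomp X f g) (scomp X f h)"
  by (rule ext) (simp add: app_simps)

lemma scomp_szero: "pre_dseq X f \<Longrightarrow> B = scod X f \<Longrightarrow> C \<in> Ob \<Longrightarrow> scomp X f (szero X B C) = szero X (sdom X f) C"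
  by (rule ext) (simp add: app_simps)

lemma tan_scomp: "pre_dseq X f \<Longrightarrow> pre_dseq X g \<Longrightarrow> scod X f = sdom X g \<Longrightarrow> tan X (scomp X f g) = scomp X (tan X f) (tan X g)"
proof (rule ext)
  fix n assume f: "pre_dseq X f" "pre_dseq X g" "scod X f = sdom X g"
  let ?A = "sdom X f" and ?B = "sdom X g"
  have "ccomp X ((tan X ^^ n) (tan X f) 0) (Pnarr X n (cpi0 X ?B ?B))
      = ccomp X (Pnarr X n (cpi0 X ?A ?A)) ((tan X ^^ n) f 0)"
    using arg_cong[OF tan_pi0[of f ?A ?B], of "\<lambda>h. (tan X ^^ n) h 0"] f
    by (simp add: tanpow_ract tanpow_lact app_simps)
  then have "ccomp X ((tan X ^^ n) (tan X f) 0) (ccomp X (Pnarr X n (cpi0 X ?B ?B)) (g n))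
      = ccomp X (Pnarr X n (cpi0 X ?A ?A)) (ccomp X ((tan X ^^ n) f 0) (g n))"
    using f by (simp del: assoc add: assoc[symmetric])
  then show "tan X (scomp X f g) n = scomp X (tan X f) (tan X g) n"
    using f by (simp add: funpow_swap1 app_simps)
qed

lemma tanpow_scomp: "pre_dseq X f \<Longrightarrow> pre_dseq X g \<Longrightarrow> scod X f = sdom X g \<Longrightarrow>
  (tan X ^^ n) (scomp X f g) = scomp X ((tan X ^^ n) f) ((tan X ^^ n) g)"
  by (induct n) (simp_all add: tan_scomp)

lemma scomp_assoc: "pre_dseq X f \<Longrightarrow> pre_dseq X g \<Longrightarrow> pre_dseq X h \<Longrightarrow> scod X f = sdom X g \<Longrightarrow> scod X g = sdom X h \<Longrightarrow>
  scomp X (scomp X f g) h = scomp X f (scomp X g h)"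
  by (rule ext) (simp add: app_simps tanpow_scomp)

lemma Dseq_scomp: "Dseq (scomp X f g) = scomp X (tan X f) (Dseq g)"
  by (rule ext) (simp add: app_simps funpow_swap1 del: tan_app)

lemma Dpow_scomp: "(Dseq ^^ m) (scomp X f g) = scomp X ((tan X ^^ m) f) ((Dseq ^^ m) g)"
  by (induct m) (simp_all add: Dseq_scomp)

section \<open>D-sequences\<close>

abbreviation iota0 :: "'o \<Rightarrow> 'a" where
  "iota0 A \<equiv> cpair X (cid X A) (czero X A A)"

abbreviation iota1 :: "'o \<Rightarrow> 'a" where
  "iota1 A \<equiv> cpair X (czero X A A) (cid X A)"

abbreviation ell :: "'o \<Rightarrow> 'a" where
  "ell A \<equiv> cross X (iota0 A) (iota1 A)"

text \<open>The paper's interchange \<open>c = 1 \<times> \<langle>\<pi>\<^sub>1, \<pi>\<^sub>0\<rangle> \<times> 1\<close> of \<open>(A \<times> A) \<times> (A \<times> A)\<close>.\<close>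
abbreviation exch :: "'o \<Rightarrow> 'a" where
  "exch A \<equiv> cpair X (cross X (cpi0 X A A) (cpi0 X A A)) (cross X (cpi1 X A A) (cpi1 X A A))"

abbreviation id_x_pi0 :: "'o \<Rightarrow> 'a" where
  "id_x_pi0 A \<equiv> cross X (cid X A) (cpi0 X A A)"

abbreviation id_x_pi1 :: "'o \<Rightarrow> 'a" where
  "id_x_pi1 A \<equiv> cross X (cid X A) (cpi1 X A A)"

abbreviation id_x_add :: "'o \<Rightarrow> 'a" where
  "id_x_add A \<equiv> cross X (cid X A) (cadd X (cpi0 X A A) (cpi1 X A A))"

definition dseq_laws :: "(nat \<Rightarrow> 'a) \<Rightarrow> bool" where
  "dseq_laws f \<longleftrightarrow>
     lact X (iota0 (sdom X f)) (Dseq f) = szero X (sdom X f) (scod X f)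
   \<and> lact X (id_x_add (sdom X f)) (Dseq f)
       = sadd X (lact X (id_x_pi0 (sdom X f)) (Dseq f)) (lact X (id_x_pi1 (sdom X f)) (Dseq f))
   \<and> lact X (ell (sdom X f)) (Dseq (Dseq f)) = Dseq f
   \<and> lact X (exch (sdom X f)) (Dseq (Dseq f)) = Dseq (Dseq f)"

lemma dseq_lawsI:
  assumes "lact X (iota0 (sdom X f)) (Dseq f) = szero X (sdom X f) (scod X f)"
    and "lact X (id_x_add (sdom X f)) (Dseq f)
       = sadd X (lact X (id_x_pi0 (sdom X f)) (Dseq f)) (lact X (id_x_pi1 (sdom X f)) (Dseq f))"
    and "lact X (ell (sdom X f)) (Dseq (Dseq f)) = Dseq f"
    and "lact X (exch (sdom X f)) (Dseq (Dseq f)) = Dseq (Dseq f)"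
  shows "dseq_laws f"
  using assms unfolding dseq_laws_def by blast

lemma dseq_lawsD:
  assumes "dseq_laws f"
  shows "lact X (iota0 (sdom X f)) (Dseq f) = szero X (sdom X f) (scod X f)"
    and "lact X (id_x_add (sdom X f)) (Dseq f)
       = sadd X (lact X (id_x_pi0 (sdom X f)) (Dseq f)) (lact X (id_x_pi1 (sdom X f)) (Dseq f))"
    and "lact X (ell (sdom X f)) (Dseq (Dseq f)) = Dseq f"
    and "lact X (exch (sdom X f)) (Dseq (Dseq f)) = Dseq (Dseq f)"
  using assms unfolding dseq_laws_def by blast+

lemma dseq_iff: "dseq X f \<longleftrightarrow> pre_dseq X f \<and> (\<forall>n. dseq_laws ((Dseq ^^ n) f))"
  unfolding dseq_def dseq_laws_def Let_def by (auto simp: numeral_2_eq_2)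

lemma dseqI: "pre_dseq X f \<Longrightarrow> (\<And>n. dseq_laws ((Dseq ^^ n) f)) \<Longrightarrow> dseq X f"
  using dseq_iff by blast

lemma dseq_pre_dseq[simp]: "dseq X f \<Longrightarrow> pre_dseq X f"
  using dseq_iff by blast

lemma dseq_laws_Dpow: "dseq X f \<Longrightarrow> dseq_laws ((Dseq ^^ n) f)"
  using dseq_iff by blast

lemma dseq_laws_dseq: "dseq X f \<Longrightarrow> dseq_laws f"
  using dseq_laws_Dpow[of f 0] by simp

lemma dseq_Dseq[simp]:
  assumes "dseq X f"
  shows "dseq X (Dseq f)"
proof (rule dseqI)
  show "pre_dseq X (Dseq f)" using assms by simp
  show "dseq_laws ((Dseq ^^ n) (Dseq f))" for n
    using dseq_laws_Dpow[OF assms, of "Suc n"] by (simp add: funpow_swap1)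
qed

lemma dseq_Dpow[simp]: "dseq X f \<Longrightarrow> dseq X ((Dseq ^^ n) f)"
  by (induct n) auto

lemma sadd_szero[simp]: "A \<in> Ob \<Longrightarrow> B \<in> Ob \<Longrightarrow> sadd X (szero X A B) (szero X A B) = szero X A B"
  by (rule ext) (simp add: app_simps)

lemma sadd_interchange:
  "pre_dseq X a \<Longrightarrow> pre_dseq X b \<Longrightarrow> pre_dseq X c \<Longrightarrow> pre_dseq X d \<Longrightarrow>
   sdom X b = sdom X a \<Longrightarrow> sdom X c = sdom X a \<Longrightarrow> sdom X d = sdom X a \<Longrightarrow>
   scod X b = scod X a \<Longrightarrow> scod X c = scod X a \<Longrightarrow> scod X d = scod X a \<Longrightarrow>
   sadd X (sadd X a b) (sadd X c d) = sadd X (sadd X a c) (sadd X b d)"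
  by (rule ext) (simp add: app_simps add_lcomm[of "b _" "c _"])

lemma dseq_laws_sadd:
  assumes f: "dseq_laws f" "pre_dseq X f" and g: "dseq_laws g" "pre_dseq X g"
    and ty: "sdom X g = sdom X f" "scod X g = scod X f"
  shows "dseq_laws (sadd X f g)"
proof -
  let ?A = "sdom X f"
  note F = dseq_lawsD[OF f(1)] and G = dseq_lawsD[OF g(1), unfolded ty]
  have "lact X (id_x_add ?A) (Dseq (sadd X f g))
      = sadd X (sadd X (lact X (id_x_pi0 ?A) (Dseq f)) (lact X (id_x_pi1 ?A) (Dseq f)))
               (sadd X (lact X (id_x_pi0 ?A) (Dseq g)) (lact X (id_x_pi1 ?A) (Dseq g)))"
    using f g ty F(2) G(2) by (simp add: Dseq_sadd lact_sadd)
  also have "\<dots> = sadd X (sadd X (lact X (id_x_pi0 ?A) (Dseq f)) (lact X (id_x_pi0 ?A) (Dseq g)))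
               (sadd X (lact X (id_x_pi1 ?A) (Dseq f)) (lact X (id_x_pi1 ?A) (Dseq g)))"
    by (rule sadd_interchange) (use f g ty in simp_all)
  also have "\<dots> = sadd X (lact X (id_x_pi0 ?A) (Dseq (sadd X f g))) (lact X (id_x_pi1 ?A) (Dseq (sadd X f g)))"
    using f g ty by (simp add: Dseq_sadd lact_sadd)
  finally show ?thesis
    using f g ty F G by (simp add: dseq_laws_def Dseq_sadd lact_sadd)
qed

lemma dseq_sadd[simp]:
  assumes "dseq X f" "dseq X g" "sdom X g = sdom X f" "scod X g = scod X f"
  shows "dseq X (sadd X f g)"
  using assms by (intro dseqI) (simp_all add: Dpow_sadd dseq_laws_sadd dseq_laws_Dpow)

lemma dseq_szero[simp]: "A \<in> Ob \<Longrightarrow> B \<in> Ob \<Longrightarrow> dseq X (szero X A B)"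
  by (rule dseqI) (simp_all add: Dpow_szero Dseq_szero dseq_laws_def)

lemma sadd_spair:
  "pre_dseq X a \<Longrightarrow> pre_dseq X b \<Longrightarrow> pre_dseq X c \<Longrightarrow> pre_dseq X d \<Longrightarrow>
   sdom X b = sdom X a \<Longrightarrow> sdom X c = sdom X a \<Longrightarrow> sdom X d = sdom X a \<Longrightarrow>
   scod X c = scod X a \<Longrightarrow> scod X d = scod X b \<Longrightarrow>
   sadd X (spair X a b) (spair X c d) = spair X (sadd X a c) (sadd X b d)"
  by (rule ext) (simp add: app_simps pair_add)

lemma spair_szero[simp]:
  "A \<in> Ob \<Longrightarrow> B \<in> Ob \<Longrightarrow> C \<in> Ob \<Longrightarrow> spair X (szero X A B) (szero X A C) = szero X A (cprod X B C)"
  by (rule ext) (simp add: app_simps)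

lemma dseq_laws_spair:
  assumes f: "dseq_laws f" "pre_dseq X f" and g: "dseq_laws g" "pre_dseq X g"
    and ty: "sdom X g = sdom X f"
  shows "dseq_laws (spair X f g)"
proof -
  let ?A = "sdom X f"
  note F = dseq_lawsD[OF f(1)] and G = dseq_lawsD[OF g(1), unfolded ty]
  have "lact X (id_x_add ?A) (Dseq (spair X f g))
      = spair X (sadd X (lact X (id_x_pi0 ?A) (Dseq f)) (lact X (id_x_pi1 ?A) (Dseq f)))
                (sadd X (lact X (id_x_pi0 ?A) (Dseq g)) (lact X (id_x_pi1 ?A) (Dseq g)))"
    using f g ty F(2) G(2) by (simp add: Dseq_spair lact_spair)
  also have "\<dots> = sadd X (spair X (lact X (id_x_pi0 ?A) (Dseq f)) (lact X (id_x_pi0 ?A) (Dseq g)))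
               (spair X (lact X (id_x_pi1 ?A) (Dseq f)) (lact X (id_x_pi1 ?A) (Dseq g)))"
    by (rule sadd_spair[symmetric]) (use f g ty in simp_all)
  also have "\<dots> = sadd X (lact X (id_x_pi0 ?A) (Dseq (spair X f g))) (lact X (id_x_pi1 ?A) (Dseq (spair X f g)))"
    using f g ty by (simp add: Dseq_spair lact_spair)
  finally show ?thesis
    using f g ty F G by (simp add: dseq_laws_def Dseq_spair lact_spair)
qed

lemma dseq_spair[simp]:
  assumes "dseq X f" "dseq X g" "sdom X g = sdom X f"
  shows "dseq X (spair X f g)"
  using assms by (intro dseqI) (simp_all add: Dpow_spair dseq_laws_spair dseq_laws_Dpow)

text \<open>Additivity of \<open>k\<close> is what lets \<open>\<iota>\<^sub>0\<close>, \<open>\<ell>\<close>, \<open>c\<close> and \<open>1 \<times> (\<pi>\<^sub>0 + \<pi>\<^sub>1)\<close> commute past \<open>k \<times> k\<close>.\<close>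
lemma dseq_laws_lact:
  assumes f: "dseq_laws f" "pre_dseq X f" and k: "additive k" "ccod X k = sdom X f"
  shows "dseq_laws (lact X k f)"
proof -
  have ar: "ar k" using k additive_ar by blast
  let ?A = "sdom X f" and ?A' = "cdom X k" and ?kk = "cross X k k"
  have "lact X (iota0 ?A') (lact X ?kk (Dseq f)) = lact X k (lact X (iota0 ?A) (Dseq f))"
    and "lact X (id_x_add ?A') (lact X ?kk (Dseq f)) = lact X (cross X k ?kk) (lact X (id_x_add ?A) (Dseq f))"
    and "lact X (id_x_pi0 ?A') (lact X ?kk (Dseq f)) = lact X (cross X k ?kk) (lact X (id_x_pi0 ?A) (Dseq f))"
    and "lact X (id_x_pi1 ?A') (lact X ?kk (Dseq f)) = lact X (cross X k ?kk) (lact X (id_x_pi1 ?A) (Dseq f))"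
    and "lact X (ell ?A') (lact X (cross X ?kk ?kk) (Dseq (Dseq f)))
      = lact X ?kk (lact X (ell ?A) (Dseq (Dseq f)))"
    and "lact X (exch ?A') (lact X (cross X ?kk ?kk) (Dseq (Dseq f)))
      = lact X (cross X ?kk ?kk) (lact X (exch ?A) (Dseq (Dseq f)))"
    using f k ar by (simp_all add: lact_lact)
  then show ?thesis
    using dseq_lawsD[OF f(1)] f k ar by (simp add: dseq_laws_def Dseq_lact lact_sadd)
qed

lemma dseq_lact[simp]:
  assumes "dseq X f" "additive k" "ccod X k = sdom X f"
  shows "dseq X (lact X k f)"
  using assms additive_ar[OF assms(2)]
  by (intro dseqI) (simp_all add: Dpow_lact dseq_laws_lact dseq_laws_Dpow)

lemma dseq_tan[simp]: "dseq X f \<Longrightarrow> dseq X (tan X f)"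
  by (simp add: tan_spair)

lemma dseq_tanpow[simp]: "dseq X f \<Longrightarrow> dseq X ((tan X ^^ n) f)"
  by (induct n) auto

lemma lact_iseq[simp]: "ar h \<Longrightarrow> ccod X h = B \<Longrightarrow> lact X h (iseq X B) = ract X (iseq X (cdom X h)) h"
  by (rule ext) (simp add: app_simps)

lemma Dpow_iseq: "A \<in> Ob \<Longrightarrow> (Dseq ^^ n) (iseq X A) = ract X (iseq X (Pn X n A)) (iseq X A n)"
  by (rule ext) (simp add: app_simps iseq_split)

lemma Dseq_iseq: "A \<in> Ob \<Longrightarrow> Dseq (iseq X A) = ract X (iseq X (cprod X A A)) (cpi1 X A A)"
  using Dpow_iseq[of A 1] by simp

lemma dseq_laws_ract_iseq:
  assumes q: "additive q" "cdom X q = A"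
  shows "dseq_laws (ract X (iseq X A) q)"
proof -
  have k: "ar q" "A \<in> Ob" using q additive_ar by auto
  have D1: "Dseq (ract X (iseq X A) q) = ract X (iseq X (cprod X A A)) (ccomp X (cpi1 X A A) q)"
    using k q by (simp add: Dseq_ract Dseq_iseq ract_ract)
  have D2: "Dseq (ract X (iseq X (cprod X A A)) (ccomp X (cpi1 X A A) q))
      = ract X (iseq X (Pn X 2 A)) (ccomp X (cpi1 X (cprod X A A) (cprod X A A)) (ccomp X (cpi1 X A A) q))"
    using k q by (simp add: Dseq_ract Dseq_iseq ract_ract numeral_2_eq_2)
  have s: "sdom X (ract X (iseq X A) q) = A" "scod X (ract X (iseq X A) q) = ccod X q"
    using k q by simp_all
  show ?thesis
    by (rule dseq_lawsI; simp only: s D1 D2)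
      (use k q in \<open>simp_all add: lact_ract ract_ract ract_sadd ract_zero numeral_2_eq_2\<close>)
qed

lemma dseq_ract_iseq[simp]:
  assumes q: "additive q" "cdom X q = A"
  shows "dseq X (ract X (iseq X A) q)"
proof (rule dseqI)
  have k: "ar q" "A \<in> Ob" using q additive_ar by auto
  show "pre_dseq X (ract X (iseq X A) q)" using k q by simp
  have "(Dseq ^^ n) (ract X (iseq X A) q) = ract X (iseq X (Pn X n A)) (ccomp X (iseq X A n) q)" for n
    using k q by (simp add: Dpow_ract Dpow_iseq ract_ract)
  then show "dseq_laws ((Dseq ^^ n) (ract X (iseq X A) q))" for n
    using k q by (simp add: dseq_laws_ract_iseq)
qed

lemma dseq_iseq[simp]: "A \<in> Ob \<Longrightarrow> dseq X (iseq X A)"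
  using dseq_ract_iseq[of "cid X A" A] by simp

lemma ract_szero[simp]: "additive k \<Longrightarrow> A \<in> Ob \<Longrightarrow> cdom X k = B \<Longrightarrow> ract X (szero X A B) k = szero X A (ccod X k)"
  by (rule ext) (simp add: app_simps)


lemma lact_iota0_tan:
  assumes h: "dseq X h"
  shows "lact X (iota0 (sdom X h)) (tan X h) = ract X h (iota0 (scod X h))"
proof -
  note H = dseq_lawsD[OF dseq_laws_dseq[OF h]]
  have p: "pre_dseq X h" using h by simp
  let ?A = "sdom X h" and ?B = "scod X h"
  have "lact X (iota0 ?A) (tan X h)
      = spair X (lact X (iota0 ?A) (lact X (cpi0 X ?A ?A) h)) (lact X (iota0 ?A) (Dseq h))"
    using p by (simp add: tan_spair lact_spair)
  also have "\<dots> = spair X h (szero X ?A ?B)"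
    using p H(1) by (simp add: lact_lact)
  also have "\<dots> = ract X h (iota0 ?B)"
    using p by (simp add: ract_pair ract_zero)
  finally show ?thesis .
qed

lemma lact_id_x_tan:
  assumes h: "dseq X h"
  defines "A \<equiv> sdom X h" and "B \<equiv> scod X h"
  defines "u \<equiv> spair X (lact X (cpi0 X A (cprod X A A)) h)
                 (spair X (lact X (id_x_pi0 A) (Dseq h)) (lact X (id_x_pi1 A) (Dseq h)))"
  shows "lact X (id_x_add A) (tan X h) = ract X u (id_x_add B)"
    and "lact X (id_x_pi0 A) (tan X h) = ract X u (id_x_pi0 B)"
    and "lact X (id_x_pi1 A) (tan X h) = ract X u (id_x_pi1 B)"
    and "pre_dseq X u" "sdom X u = cprod X A (cprod X A A)" "scod X u = cprod X B (cprod X B B)"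
proof -
  have p: "pre_dseq X h" using h by simp
  have o: "A \<in> Ob" "B \<in> Ob" using p A_def B_def by simp_all
  show "pre_dseq X u" "sdom X u = cprod X A (cprod X A A)" "scod X u = cprod X B (cprod X B B)"
    using p o unfolding u_def A_def B_def by simp_all
  let ?h0 = "lact X (cpi0 X A (cprod X A A)) h"
  have "lact X (id_x_add A) (tan X h) = spair X ?h0 (lact X (id_x_add A) (Dseq h))"
    "lact X (id_x_pi0 A) (tan X h) = spair X ?h0 (lact X (id_x_pi0 A) (Dseq h))"
    "lact X (id_x_pi1 A) (tan X h) = spair X ?h0 (lact X (id_x_pi1 A) (Dseq h))"
    using p o by (simp_all add: tan_spair lact_spair lact_lact A_def)
  moreover have
    "ract X u (id_x_add B) = spair X ?h0 (sadd X (lact X (id_x_pi0 A) (Dseq h)) (lact X (id_x_pi1 A) (Dseq h)))"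
    "ract X u (id_x_pi0 B) = spair X ?h0 (lact X (id_x_pi0 A) (Dseq h))"
    "ract X u (id_x_pi1 B) = spair X ?h0 (lact X (id_x_pi1 A) (Dseq h))"
    unfolding u_def using p o by (auto intro!: ext simp: app_simps A_def B_def)
  ultimately show "lact X (id_x_add A) (tan X h) = ract X u (id_x_add B)"
    and "lact X (id_x_pi0 A) (tan X h) = ract X u (id_x_pi0 B)"
    and "lact X (id_x_pi1 A) (tan X h) = ract X u (id_x_pi1 B)"
    using dseq_lawsD(2)[OF dseq_laws_dseq[OF h], folded A_def] by simp_all
qed

lemma Dseq_tan: "pre_dseq X h \<Longrightarrow> Dseq (tan X h) = spair X (lact X (cross X (cpi0 X (sdom X h) (sdom X h)) (cpi0 X (sdom X h) (sdom X h))) (Dseq h)) (Dseq (Dseq h))"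
  by (simp add: tan_spair Dseq_spair Dseq_lact)

lemma lact_ell_tan2:
  assumes h: "dseq X h"
  defines "A \<equiv> sdom X h" and "B \<equiv> scod X h"
  shows "lact X (ell A) (tan X (tan X h)) = ract X (tan X h) (ell B)"
proof -
  note H = dseq_lawsD[OF dseq_laws_dseq[OF h], folded A_def B_def]
  have p: "pre_dseq X h" using h by simp
  have o: "A \<in> Ob" "B \<in> Ob" using p A_def B_def by simp_all
  let ?p0 = "cpi0 X A A"
  have x1: "ccomp X (ell A) (cpi0 X (cprod X A A) (cprod X A A)) = ccomp X ?p0 (iota0 A)" using o by simp
  have x2: "ccomp X (ell A) (cross X ?p0 ?p0) = ccomp X ?p0 (iota0 A)" using o by (simp add: cross_def)
  have "lact X (ell A) (tan X (tan X h))
      = spair X (lact X (ccomp X (ell A) (cpi0 X (cprod X A A) (cprod X A A))) (tan X h))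
                (spair X (lact X (ccomp X (ell A) (cross X ?p0 ?p0)) (Dseq h)) (lact X (ell A) (Dseq (Dseq h))))"
    using p o by (simp add: tan_spair[of "tan X h"] Dseq_tan lact_spair lact_lact A_def)
  also have "\<dots> = spair X (lact X ?p0 (lact X (iota0 A) (tan X h))) (spair X (lact X ?p0 (lact X (iota0 A) (Dseq h))) (Dseq h))"
    unfolding x1 x2 using p o H(3) by (simp add: lact_lact A_def)
  also have "\<dots> = spair X (lact X ?p0 (ract X h (iota0 B))) (spair X (szero X (cprod X A A) B) (Dseq h))"
    using lact_iota0_tan[OF h] H(1) p o by (simp add: A_def B_def)
  also have "\<dots> = ract X (tan X h) (ell B)"
    using p o by (simp add: tan_spair ract_spair_cross lact_ract ract_pair ract_zero lact_spair A_def B_def)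
  finally show ?thesis .
qed

lemma lact_exch_tan2:
  assumes h: "dseq X h"
  defines "A \<equiv> sdom X h" and "B \<equiv> scod X h"
  shows "lact X (exch A) (tan X (tan X h)) = ract X (tan X (tan X h)) (exch B)"
proof -
  note H = dseq_lawsD[OF dseq_laws_dseq[OF h], folded A_def B_def]
  have p: "pre_dseq X h" using h by simp
  have o: "A \<in> Ob" "B \<in> Ob" using p A_def B_def by simp_all
  let ?p0 = "cpi0 X A A" and ?p1 = "cpi1 X A A"
  let ?P0 = "cpi0 X (cprod X A A) (cprod X A A)"
  have x1: "ccomp X (exch A) (cross X ?p0 ?p0) = ?P0" using o by (simp add: cross_def)
  have "lact X (exch A) (tan X (tan X h))
      = spair X (spair X (lact X (ccomp X ?P0 ?p0) h) (lact X (cross X ?p0 ?p0) (Dseq h)))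
                (spair X (lact X (ccomp X (exch A) (cross X ?p0 ?p0)) (Dseq h)) (lact X (exch A) (Dseq (Dseq h))))"
    using p o by (simp add: tan_spair Dseq_spair Dseq_lact lact_spair lact_lact A_def)
  also have "\<dots> = spair X (spair X (lact X (ccomp X ?P0 ?p0) h) (lact X (cross X ?p0 ?p0) (Dseq h)))
                (spair X (lact X ?P0 (Dseq h)) (Dseq (Dseq h)))"
    unfolding x1 H(4) ..
  also have "\<dots> = ract X (tan X (tan X h)) (exch B)"
    using p o by (intro ext) (simp add: app_simps A_def B_def)
  finally show ?thesis .
qed

lemma lact_scomp_through:
  assumes "pre_dseq X f" "pre_dseq X f'" "pre_dseq X g" "ar a" "ar b"
    and "ccod X a = sdom X f" "scod X f = sdom X g" "cdom X b = scod X f'" "ccod X b = sdom X g"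
    and through: "lact X a f = ract X f' b"
  shows "lact X a (scomp X f g) = scomp X f' (lact X b g)"
proof -
  have "lact X a (scomp X f g) = scomp X (lact X a f) g" using assms(1-9) by (simp add: scomp_lact)
  also have "\<dots> = scomp X f' (lact X b g)" unfolding through using assms by (simp add: scomp_ract)
  finally show ?thesis .
qed

lemma dseq_laws_scomp:
  assumes h: "dseq X h" and g: "dseq X g" and t: "scod X h = sdom X g"
  shows "dseq_laws (scomp X h g)"
proof -
  have ph: "pre_dseq X h" and pg: "pre_dseq X g" using h g by simp_all
  let ?A = "sdom X h" and ?B = "scod X h"
  have o: "?A \<in> Ob" "?B \<in> Ob" using ph by simp_all
  note G = dseq_lawsD[OF dseq_laws_dseq[OF g], folded t]
  have iota0: "lact X (iota0 ?A) (scomp X (tan X h) (Dseq g)) = scomp X h (lact X (iota0 ?B) (Dseq g))"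
    by (rule lact_scomp_through) (use ph pg t o lact_iota0_tan[OF h] in simp_all)
  have ell: "lact X (ell ?A) (scomp X (tan X (tan X h)) (Dseq (Dseq g)))
      = scomp X (tan X h) (lact X (ell ?B) (Dseq (Dseq g)))"
    by (rule lact_scomp_through) (use ph pg t o lact_ell_tan2[OF h] in simp_all)
  have exch: "lact X (exch ?A) (scomp X (tan X (tan X h)) (Dseq (Dseq g)))
      = scomp X (tan X (tan X h)) (lact X (exch ?B) (Dseq (Dseq g)))"
    by (rule lact_scomp_through) (use ph pg t o lact_exch_tan2[OF h] in simp_all)
  define u where "u \<equiv> spair X (lact X (cpi0 X ?A (cprod X ?A ?A)) h)
                 (spair X (lact X (id_x_pi0 ?A) (Dseq h)) (lact X (id_x_pi1 ?A) (Dseq h)))"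
  note U = lact_id_x_tan[OF h, folded u_def]
  have sums: "lact X (id_x_add ?A) (scomp X (tan X h) (Dseq g)) = scomp X u (lact X (id_x_add ?B) (Dseq g))"
    "lact X (id_x_pi0 ?A) (scomp X (tan X h) (Dseq g)) = scomp X u (lact X (id_x_pi0 ?B) (Dseq g))"
    "lact X (id_x_pi1 ?A) (scomp X (tan X h) (Dseq g)) = scomp X u (lact X (id_x_pi1 ?B) (Dseq g))"
    by (rule lact_scomp_through; use ph pg t o U in simp)+
  show ?thesis
    using ph pg t o U(4-6) G iota0 ell exch sums
    by (simp add: dseq_laws_def Dseq_scomp scomp_szero scomp_sadd)
qed

lemma dseq_scomp[simp]: "dseq X f \<Longrightarrow> dseq X g \<Longrightarrow> scod X f = sdom X g \<Longrightarrow> dseq X (scomp X f g)"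
proof (rule dseqI)
  assume f: "dseq X f" "dseq X g" "scod X f = sdom X g"
  show "pre_dseq X (scomp X f g)" using f by simp
  fix n show "dseq_laws ((Dseq ^^ n) (scomp X f g))"
    unfolding Dpow_scomp by (rule dseq_laws_scomp) (use f in simp_all)
qed

end

section \<open>The Cartesian left additive category of D-sequences\<close>

abbreviation Dpows :: "(nat \<Rightarrow> 'a) \<Rightarrow> nat \<Rightarrow> nat \<Rightarrow> 'a" where
  "Dpows f \<equiv> \<lambda>m. (Dseq ^^ m) f"

lemma Dcat_sel[simp]:
  "cObj (Dcat X) = cObj X" "cArr (Dcat X) = {f. dseq X f}" "cdom (Dcat X) = sdom X" "ccod (Dcat X) = scod X"
  "ccomp (Dcat X) = scomp X" "cid (Dcat X) = iseq X" "cadd (Dcat X) = sadd X" "czero (Dcat X) = szero X"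
  "cprod (Dcat X) = cprod X" "cterm (Dcat X) = cterm X"
  "cpi0 (Dcat X) = (\<lambda>A B. ract X (iseq X (cprod X A B)) (cpi0 X A B))"
  "cpi1 (Dcat X) = (\<lambda>A B. ract X (iseq X (cprod X A B)) (cpi1 X A B))"
  "cpair (Dcat X) = spair X"
  by (simp_all add: Dcat_def spair_def[abs_def])

context clac_category
begin

lemma hom_Dcat: "f \<in> hom (Dcat X) A B \<longleftrightarrow> dseq X f \<and> sdom X f = A \<and> scod X f = B"
  by (simp add: hom_def)

lemma sadd_comm: "pre_dseq X f \<Longrightarrow> pre_dseq X g \<Longrightarrow> sdom X g = sdom X f \<Longrightarrow> scod X g = scod X f \<Longrightarrow> sadd X f g = sadd X g f"
  by (rule ext) (simp add: app_simps add_comm)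

lemma sadd_assoc: "pre_dseq X f \<Longrightarrow> pre_dseq X g \<Longrightarrow> pre_dseq X h \<Longrightarrow> sdom X g = sdom X f \<Longrightarrow> scod X g = scod X f \<Longrightarrow>
  sdom X h = sdom X f \<Longrightarrow> scod X h = scod X f \<Longrightarrow> sadd X (sadd X f g) h = sadd X f (sadd X g h)"
  by (rule ext) (simp add: app_simps)

lemma sadd_szero_right: "pre_dseq X f \<Longrightarrow> sadd X f (szero X (sdom X f) (scod X f)) = f"
  by (rule ext) (simp add: app_simps)

lemma terminal_szero_unique:
  "pre_dseq X h \<Longrightarrow> scod X h = cterm X \<Longrightarrow> h = szero X (sdom X h) (cterm X)"
  by (rule ext) (rule term_uniq; simp add: app_simps)

lemma spair_ract_proj:
  "pre_dseq X h \<Longrightarrow> scod X h = cprod X A B \<Longrightarrow> A \<in> Ob \<Longrightarrow> B \<in> Ob \<Longrightarrow>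
   spair X (ract X h (cpi0 X A B)) (ract X h (cpi1 X A B)) = h"
  by (rule ext) (simp add: app_simps)

lemma ract_sadd_additive:
  "additive k \<Longrightarrow> pre_dseq X f \<Longrightarrow> pre_dseq X g \<Longrightarrow> sdom X g = sdom X f \<Longrightarrow>
   scod X f = cdom X k \<Longrightarrow> scod X g = cdom X k \<Longrightarrow>
   ract X (sadd X f g) k = sadd X (ract X f k) (ract X g k)"
  by (rule ext) (simp add: app_simps)

lemma clac_category_Dcat: "clac_category (Dcat X)"
proof unfold_locales
  show "\<forall>A\<in>cObj (Dcat X). \<exists>!h. h \<in> hom (Dcat X) A (cterm (Dcat X))"
  proof
    fix A assume "A \<in> cObj (Dcat X)"
    then show "\<exists>!h. h \<in> hom (Dcat X) A (cterm (Dcat X))"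
      by (intro ex1I[of _ "szero X A (cterm X)"]) (auto simp: hom_Dcat intro: terminal_szero_unique)
  qed
qed (auto simp: hom_Dcat scomp_assoc sadd_szero_right scomp_sadd scomp_szero scomp_lift_right
    spair_ract_proj ract_sadd_additive intro: sadd_comm sadd_assoc)

lemma is_clac_Dcat: "is_clac (Dcat X)"
  using clac_category_Dcat by (simp add: clac_category_iff_is_clac)

section \<open>The comultiplication\<close>

definition lift :: "'a \<Rightarrow> nat \<Rightarrow> 'a" where
  "lift k = ract X (iseq X (cdom X k)) k"

lemmas Dcat_sel_unlifted = Dcat_sel(1-5,9,10)

lemma Pobj_Dcat[simp]: "Pobj (Dcat X) = Pobj X"
  by (rule ext) (simp add: Pobj_def)

lemma Pn_Dcat[simp]: "Pn (Dcat X) = Pn X"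
  by (intro ext) (simp add: Pn_def)

lemma pre_dseq_lift[simp]: "ar k \<Longrightarrow> pre_dseq X (lift k)"
  and sdom_lift[simp]: "ar k \<Longrightarrow> sdom X (lift k) = cdom X k"
  and scod_lift[simp]: "ar k \<Longrightarrow> scod X (lift k) = ccod X k"
  by (simp_all add: lift_def)

lemma Dcat_id_lift: "A \<in> Ob \<Longrightarrow> cid (Dcat X) A = lift (cid X A)"
  by (simp add: lift_def)

lemma Dcat_zero_lift: "A \<in> Ob \<Longrightarrow> B \<in> Ob \<Longrightarrow> czero (Dcat X) A B = lift (czero X A B)"
  by (simp add: lift_def ract_zero)

lemma Dcat_pi_lift:
  "A \<in> Ob \<Longrightarrow> B \<in> Ob \<Longrightarrow> cpi0 (Dcat X) A B = lift (cpi0 X A B)"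
  "A \<in> Ob \<Longrightarrow> B \<in> Ob \<Longrightarrow> cpi1 (Dcat X) A B = lift (cpi1 X A B)"
  by (simp_all add: lift_def)

lemma Dcat_pair_lift:
  "ar a \<Longrightarrow> ar b \<Longrightarrow> cdom X a = cdom X b \<Longrightarrow> cpair (Dcat X) (lift a) (lift b) = lift (cpair X a b)"
  by (simp add: lift_def) (rule ext, simp add: app_simps)

lemma Dcat_add_lift:
  "ar a \<Longrightarrow> ar b \<Longrightarrow> cdom X a = cdom X b \<Longrightarrow> ccod X a = ccod X b \<Longrightarrow>
   cadd (Dcat X) (lift a) (lift b) = lift (cadd X a b)"
  by (simp add: lift_def) (rule ext, simp add: app_simps)

lemma scomp_lift: "ar a \<Longrightarrow> ar b \<Longrightarrow> ccod X a = cdom X b \<Longrightarrow> scomp X (lift a) (lift b) = lift (ccomp X a b)"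
  by (simp add: lift_def scomp_lift_right ract_ract)

lemma Dcat_cross_lift: "ar a \<Longrightarrow> ar b \<Longrightarrow> cross (Dcat X) (lift a) (lift b) = lift (cross X a b)"
  unfolding cross_def[of "Dcat X"] cross_def[of X]
  by (simp del: Dcat_sel add: Dcat_sel_unlifted Dcat_pi_lift Dcat_pair_lift scomp_lift)

lemma Dcat_Pnarr_lift: "ar a \<Longrightarrow> Pnarr (Dcat X) n (lift a) = lift (Pnarr X n a)"
proof (induct n)
  case 0
  then show ?case by (simp add: Pnarr_def)
next
  case (Suc n)
  have "Pnarr (Dcat X) (Suc n) (lift a) = cross (Dcat X) (Pnarr (Dcat X) n (lift a)) (Pnarr (Dcat X) n (lift a))"
    by (simp add: Pnarr_def Parr_def)
  then show ?case using Suc by (simp add: Dcat_cross_lift)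
qed

lemma Dcat_lact_lift_Dpows:
  assumes "pre_dseq X f" "ar h" "ccod X h = sdom X f"
  shows "lact (Dcat X) (lift h) (Dpows f) = Dpows (lact X h f)"
proof
  fix m
  have "lact (Dcat X) (lift h) (Dpows f) m = scomp X (lift (Pnarr X m h)) ((Dseq ^^ m) f)"
    using assms by (simp add: lact_def Dcat_Pnarr_lift)
  also have "\<dots> = lact X (Pnarr X m h) ((Dseq ^^ m) f)"
    unfolding lift_def by (rule scomp_lift_left) (use assms in simp_all)
  also have "\<dots> = (Dseq ^^ m) (lact X h f)" using assms by (simp add: Dpow_lact)
  finally show "lact (Dcat X) (lift h) (Dpows f) m = Dpows (lact X h f) m" .
qed

lemma Dcat_sadd_Dpows: "sadd (Dcat X) (Dpows f) (Dpows g) = Dpows (sadd X f g)"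
  by (rule ext) (simp add: sadd_def[of "Dcat X"] Dpow_sadd)

lemma Dcat_szero_Dpows: "szero (Dcat X) A B = Dpows (szero X A B)"
  by (rule ext) (simp add: szero_def[of "Dcat X"] Dpow_szero)

lemma Dpow_Dpows: "(Dseq ^^ k) (Dpows f) = Dpows ((Dseq ^^ k) f)"
  by (rule ext) (simp add: Dpow_app Dpow_Dpow)

lemma Dseq_Dpows: "Dseq (Dpows f) = Dpows (Dseq f)"
  by (rule ext) (simp add: Dseq_app funpow_swap1)

lemma sdom_Dpows: "sdom (Dcat X) (Dpows f) = sdom X f"
  and scod_Dpows: "scod (Dcat X) (Dpows f) = scod X f"
  by (simp_all add: sdom_def scod_def)

lemma dseq_Dpows:
  assumes f: "dseq X f"
  shows "dseq (Dcat X) (Dpows f)"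
proof -
  have "pre_dseq (Dcat X) (Dpows f)"
    using f unfolding pre_dseq_def by (simp add: hom_Dcat sdom_Dpows scod_Dpows del: Dcat_sel)
  moreover have "clac_category.dseq_laws (Dcat X) (Dpows g)" if g: "dseq X g" for g
    using dseq_lawsD[OF dseq_laws_dseq[OF g]] g
    by (simp del: Dcat_sel add: clac_category.dseq_laws_def[OF clac_category_Dcat] Dcat_sel_unlifted
        Dcat_id_lift Dcat_zero_lift Dcat_pi_lift Dcat_pair_lift Dcat_add_lift Dcat_cross_lift
        Dcat_lact_lift_Dpows Dcat_sadd_Dpows Dcat_szero_Dpows Dseq_Dpows sdom_Dpows scod_Dpows)
  ultimately show ?thesis
    using f by (simp add: clac_category.dseq_iff[OF clac_category_Dcat] Dpow_Dpows del: Dcat_sel)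
qed

end

lemma deltaF_sel[simp]: "fobj deltaF = id" "farr deltaF = (\<lambda>f n. (Dseq ^^ n) f)"
  by (simp_all add: deltaF_def)

lemma epsF_sel[simp]: "fobj epsF = id" "farr epsF = (\<lambda>f. f 0)"
  by (simp_all add: epsF_def)

context clac_category
begin

lemma Dcat_iseq: "A \<in> Ob \<Longrightarrow> iseq (Dcat X) A = Dpows (iseq X A)"
proof (rule ext)
  fix n assume "A \<in> Ob"
  then show "iseq (Dcat X) A n = (Dseq ^^ n) (iseq X A)"
  proof (induct n)
    case 0
    then show ?case by simp
  next
    case (Suc n)
    have "iseq (Dcat X) A (Suc n) = scomp X (lift (cpi1 X (Pn X n A) (Pn X n A))) ((Dseq ^^ n) (iseq X A))"
      using Suc by (simp add: Dcat_pi_lift del: Dcat_sel) (simp add: Dcat_sel_unlifted)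
    also have "\<dots> = lact X (cpi1 X (Pn X n A) (Pn X n A)) ((Dseq ^^ n) (iseq X A))"
      unfolding lift_def by (rule scomp_lift_left) (use Suc in simp_all)
    also have "\<dots> = (Dseq ^^ Suc n) (iseq X A)"
      using Suc by (simp add: Dpow_iseq lact_ract ract_ract del: funpow.simps)
    finally show ?case .
  qed
qed

lemma Dcat_tan_Dpows: "pre_dseq X f \<Longrightarrow> tan (Dcat X) (Dpows f) = Dpows (tan X f)"
proof (rule ext)
  fix n assume p: "pre_dseq X f"
  let ?p0 = "Pnarr X n (cpi0 X (sdom X f) (sdom X f))"
  have "tan (Dcat X) (Dpows f) n = spair X (scomp X (lift ?p0) ((Dseq ^^ n) f)) ((Dseq ^^ Suc n) f)"
    using p by (simp add: tan_def sdom_Dpows scod_Dpows Dcat_pi_lift Dcat_Pnarr_lift del: Dcat_sel funpow.simps)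
      (simp add: Dcat_sel_unlifted)
  also have "\<dots> = spair X (lact X ?p0 ((Dseq ^^ n) f)) ((Dseq ^^ Suc n) f)"
    using p unfolding lift_def by (subst scomp_lift_left) simp_all
  also have "\<dots> = (Dseq ^^ n) (tan X f)"
    using p by (simp add: tan_spair Dpow_spair Dpow_lact funpow_swap1)
  finally show "tan (Dcat X) (Dpows f) n = Dpows (tan X f) n" .
qed

lemma Dcat_tanpow_Dpows: "pre_dseq X f \<Longrightarrow> (tan (Dcat X) ^^ k) (Dpows f) = Dpows ((tan X ^^ k) f)"
  by (induct k) (simp_all add: Dcat_tan_Dpows del: Dcat_sel)

lemma Dpows_scomp:
  "pre_dseq X f \<Longrightarrow> Dpows (scomp X f g) = scomp (Dcat X) (Dpows f) (Dpows g)"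
  by (rule ext) (simp add: Dpow_scomp scomp_def[of "Dcat X"] Dcat_tanpow_Dpows)

lemma Dpows_pi:
  "A \<in> Ob \<Longrightarrow> B \<in> Ob \<Longrightarrow> Dpows (cpi0 (Dcat X) A B) = cpi0 (Dcat (Dcat X)) A B"
  "A \<in> Ob \<Longrightarrow> B \<in> Ob \<Longrightarrow> Dpows (cpi1 (Dcat X) A B) = cpi1 (Dcat (Dcat X)) A B"
  by (simp_all add: Dpow_ract)
    (rule ext, simp add: ract_def[of "Dcat X"] app_simps Dcat_iseq scomp_lift_right)+

lemma deltaF_sclf: "is_sclf (Dcat X) (Dcat (Dcat X)) deltaF"
  unfolding is_sclf_def
  by (auto simp del: Dcat_sel simp: Dcat_sel_unlifted Dcat_sel(6-8) hom_def dseq_Dpows sdom_Dpows scod_Dpows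
      Dcat_iseq Dpows_scomp Dpows_pi Dcat_sadd_Dpows Dcat_szero_Dpows)

lemma epsF_sclf: "is_sclf (Dcat X) X epsF"
  unfolding is_sclf_def by (auto simp: hom_Dcat hom_iff app_simps)

end

section \<open>Functoriality\<close>

locale strict_clac_functor = X: clac_category X + Y: clac_category Y
  for X :: "('o, 'a) clac" and Y :: "('p, 'b) clac" +
  fixes F :: "('o, 'p, 'a, 'b) sfun"
  assumes sclf: "is_sclf X Y F"
begin

lemma F_ob[simp]: "A \<in> cObj X \<Longrightarrow> fobj F A \<in> cObj Y"
  using sclf unfolding is_sclf_def by blast

lemma F_ty: "f \<in> cArr X \<Longrightarrow> farr F f \<in> cArr Y \<and> cdom Y (farr F f) = fobj F (cdom X f) \<and> ccod Y (farr F f) = fobj F (ccod X f)"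
proof -
  assume f: "f \<in> cArr X"
  have "f \<in> hom X (cdom X f) (ccod X f)" using f by (simp add: X.hom_iff)
  hence "farr F f \<in> hom Y (fobj F (cdom X f)) (fobj F (ccod X f))"
    using sclf f unfolding is_sclf_def by (meson X.cod_ob X.dom_ob)
  thus ?thesis by (simp add: Y.hom_iff)
qed

lemma F_ar[simp]: "f \<in> cArr X \<Longrightarrow> farr F f \<in> cArr Y"
  and F_dom[simp]: "f \<in> cArr X \<Longrightarrow> cdom Y (farr F f) = fobj F (cdom X f)"
  and F_cod[simp]: "f \<in> cArr X \<Longrightarrow> ccod Y (farr F f) = fobj F (ccod X f)"
  using F_ty by auto

lemma F_id[simp]: "A \<in> cObj X \<Longrightarrow> farr F (cid X A) = cid Y (fobj F A)"
  using sclf unfolding is_sclf_def by blast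

lemma F_comp[simp]: "f \<in> cArr X \<Longrightarrow> g \<in> cArr X \<Longrightarrow> ccod X f = cdom X g \<Longrightarrow>
  farr F (ccomp X f g) = ccomp Y (farr F f) (farr F g)"
proof -
  assume a: "f \<in> cArr X" "g \<in> cArr X" "ccod X f = cdom X g"
  have "f \<in> hom X (cdom X f) (ccod X f)" "g \<in> hom X (ccod X f) (ccod X g)" using a by (simp_all add: X.hom_iff)
  thus ?thesis using sclf a unfolding is_sclf_def by (meson X.cod_ob X.dom_ob)
qed

lemma F_prod[simp]: "A \<in> cObj X \<Longrightarrow> B \<in> cObj X \<Longrightarrow> fobj F (cprod X A B) = cprod Y (fobj F A) (fobj F B)"
  and F_pi0[simp]: "A \<in> cObj X \<Longrightarrow> B \<in> cObj X \<Longrightarrow> farr F (cpi0 X A B) = cpi0 Y (fobj F A) (fobj F B)"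
  and F_pi1[simp]: "A \<in> cObj X \<Longrightarrow> B \<in> cObj X \<Longrightarrow> farr F (cpi1 X A B) = cpi1 Y (fobj F A) (fobj F B)"
  using sclf unfolding is_sclf_def by blast+

lemma F_term[simp]: "fobj F (cterm X) = cterm Y"
  using sclf unfolding is_sclf_def by blast

lemma F_add[simp]: "f \<in> cArr X \<Longrightarrow> g \<in> cArr X \<Longrightarrow> cdom X f = cdom X g \<Longrightarrow> ccod X f = ccod X g \<Longrightarrow>
  farr F (cadd X f g) = cadd Y (farr F f) (farr F g)"
proof -
  assume a: "f \<in> cArr X" "g \<in> cArr X" "cdom X f = cdom X g" "ccod X f = ccod X g"
  have "f \<in> hom X (cdom X f) (ccod X f)" "g \<in> hom X (cdom X f) (ccod X f)" using a by (simp_all add: X.hom_iff)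
  thus ?thesis using sclf a unfolding is_sclf_def by (meson X.cod_ob X.dom_ob)
qed

lemma F_zero[simp]: "A \<in> cObj X \<Longrightarrow> B \<in> cObj X \<Longrightarrow> farr F (czero X A B) = czero Y (fobj F A) (fobj F B)"
  using sclf unfolding is_sclf_def by blast

lemma F_pair[simp]: "f \<in> cArr X \<Longrightarrow> g \<in> cArr X \<Longrightarrow> cdom X f = cdom X g \<Longrightarrow>
  farr F (cpair X f g) = cpair Y (farr F f) (farr F g)"
proof -
  assume a: "f \<in> cArr X" "g \<in> cArr X" "cdom X f = cdom X g"
  have e0: "ccomp Y (farr F (cpair X f g)) (cpi0 Y (fobj F (ccod X f)) (fobj F (ccod X g))) = farr F f"
    using a F_comp[of "cpair X f g" "cpi0 X (ccod X f) (ccod X g)"] by simp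
  have e1: "ccomp Y (farr F (cpair X f g)) (cpi1 Y (fobj F (ccod X f)) (fobj F (ccod X g))) = farr F g"
    using a F_comp[of "cpair X f g" "cpi1 X (ccod X f) (ccod X g)"] by simp
  show ?thesis
    by (rule Y.pair_ext[of _ _ "fobj F (ccod X f)" "fobj F (ccod X g)"]) (use a e0 e1 in simp_all)
qed

lemma F_cross[simp]: "f \<in> cArr X \<Longrightarrow> g \<in> cArr X \<Longrightarrow> farr F (cross X f g) = cross Y (farr F f) (farr F g)"
  by (simp add: cross_def)

lemma F_Pn[simp]: "A \<in> cObj X \<Longrightarrow> fobj F (Pn X n A) = Pn Y n (fobj F A)"
  by (induct n) simp_all

lemma F_Pnarr[simp]: "h \<in> cArr X \<Longrightarrow> farr F (Pnarr X n h) = Pnarr Y n (farr F h)"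
  by (induct n) simp_all

lemma F_iseq[simp]: "A \<in> cObj X \<Longrightarrow> farr F (iseq X A n) = iseq Y (fobj F A) n"
  by (induct n) simp_all

definition Fseq :: "(nat \<Rightarrow> 'a) \<Rightarrow> nat \<Rightarrow> 'b" where
  "Fseq f = (\<lambda>n. farr F (f n))"

lemma Fseq_app: "Fseq f n = farr F (f n)"
  by (simp add: Fseq_def)

lemma Fseq_pre_dseq[simp]: "pre_dseq X f \<Longrightarrow> pre_dseq Y (Fseq f)"
  and Fseq_sdom[simp]: "pre_dseq X f \<Longrightarrow> sdom Y (Fseq f) = fobj F (sdom X f)"
  and Fseq_scod[simp]: "pre_dseq X f \<Longrightarrow> scod Y (Fseq f) = fobj F (scod X f)"
  using Y.pre_dseq_ends[of "Fseq f" "fobj F (sdom X f)" "fobj F (scod X f)"] by (simp_all add: Fseq_app)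

lemma Fseq_lact[simp]: "pre_dseq X f \<Longrightarrow> h \<in> cArr X \<Longrightarrow> ccod X h = sdom X f \<Longrightarrow> Fseq (lact X h f) = lact Y (farr F h) (Fseq f)"
  by (rule ext) (simp add: Fseq_app X.app_simps Y.app_simps)

lemma Fseq_ract[simp]: "pre_dseq X f \<Longrightarrow> k \<in> cArr X \<Longrightarrow> cdom X k = scod X f \<Longrightarrow> Fseq (ract X f k) = ract Y (Fseq f) (farr F k)"
  by (rule ext) (simp add: Fseq_app X.app_simps Y.app_simps)

lemma Fseq_sadd[simp]: "pre_dseq X f \<Longrightarrow> pre_dseq X g \<Longrightarrow> sdom X g = sdom X f \<Longrightarrow> scod X g = scod X f \<Longrightarrow>
  Fseq (sadd X f g) = sadd Y (Fseq f) (Fseq g)"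
  by (rule ext) (simp add: Fseq_app X.app_simps Y.app_simps)

lemma Fseq_szero[simp]: "A \<in> cObj X \<Longrightarrow> B \<in> cObj X \<Longrightarrow> Fseq (szero X A B) = szero Y (fobj F A) (fobj F B)"
  by (rule ext) (simp add: Fseq_app X.app_simps Y.app_simps)

lemma Fseq_Dpow[simp]: "Fseq ((Dseq ^^ k) f) = (Dseq ^^ k) (Fseq f)"
  by (rule ext) (simp add: Fseq_app X.app_simps Y.app_simps)

lemma Fseq_Dseq[simp]: "Fseq (Dseq f) = Dseq (Fseq f)"
  by (rule ext) (simp add: Fseq_app X.app_simps Y.app_simps)

lemma Fseq_tan[simp]: "pre_dseq X f \<Longrightarrow> Fseq (tan X f) = tan Y (Fseq f)"
  by (rule ext) (simp add: Fseq_app X.app_simps Y.app_simps)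

lemma Fseq_tanpow[simp]: "pre_dseq X f \<Longrightarrow> Fseq ((tan X ^^ k) f) = (tan Y ^^ k) (Fseq f)"
  by (induct k) simp_all

lemma Fseq_scomp[simp]: "pre_dseq X f \<Longrightarrow> pre_dseq X g \<Longrightarrow> scod X f = sdom X g \<Longrightarrow> Fseq (scomp X f g) = scomp Y (Fseq f) (Fseq g)"
proof (rule ext)
  fix n assume a: "pre_dseq X f" "pre_dseq X g" "scod X f = sdom X g"
  have "farr F ((tan X ^^ n) f 0) = (tan Y ^^ n) (Fseq f) 0"
    using Fseq_tanpow[OF a(1), of n] by (metis Fseq_app)
  thus "Fseq (scomp X f g) n = scomp Y (Fseq f) (Fseq g) n"
    using a by (simp add: Fseq_app X.app_simps Y.app_simps)
qed

lemma Fseq_iseq[simp]: "A \<in> cObj X \<Longrightarrow> Fseq (iseq X A) = iseq Y (fobj F A)"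
  by (rule ext) (simp add: Fseq_app)

lemma Fseq_dseq_laws:
  assumes "pre_dseq X f" "X.dseq_laws f"
  shows "Y.dseq_laws (Fseq f)"
proof -
  note L = X.dseq_lawsD[OF assms(2)]
  show ?thesis
    using assms(1) arg_cong[OF L(1), of Fseq] arg_cong[OF L(2), of Fseq] arg_cong[OF L(3), of Fseq]
      arg_cong[OF L(4), of Fseq]
    by (simp add: Y.dseq_laws_def)
qed

lemma Fseq_dseq[simp]: "dseq X f \<Longrightarrow> dseq Y (Fseq f)"
  by (simp add: X.dseq_iff Y.dseq_iff Fseq_Dpow[symmetric] Fseq_dseq_laws del: Fseq_Dpow)

lemma Dfun_sel[simp]: "fobj (Dfun F) = fobj F" "farr (Dfun F) = Fseq"
  by (simp_all add: Dfun_def Fseq_def[abs_def])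

lemma Dfun_sclf: "is_sclf (Dcat X) (Dcat Y) (Dfun F)"
  unfolding is_sclf_def by (auto simp: X.hom_Dcat Y.hom_Dcat)

end

section \<open>Naturality and the comonad laws\<close>

lemma Dfun_idF: "feq X (Dfun idF) idF"
  by (simp add: feq_def Dfun_def idF_def)

lemma Dfun_fcompose: "feq X (Dfun (fcompose F G)) (fcompose (Dfun F) (Dfun G))"
  by (simp add: feq_def fcompose_def Dfun_def)

lemma epsF_natural: "feq X (fcompose epsF F) (fcompose (Dfun F) epsF)"
  by (simp add: feq_def fcompose_def Dfun_def epsF_def)

lemma deltaF_natural: "feq X (fcompose deltaF (Dfun (Dfun F))) (fcompose (Dfun F) deltaF)"
  by (simp add: feq_def fcompose_def Dfun_def deltaF_def Dpow_app fun_eq_iff)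

lemma deltaF_epsF: "feq X (fcompose deltaF epsF) idF"
  by (simp add: feq_def fcompose_def deltaF_def epsF_def idF_def)

lemma deltaF_Dfun_epsF: "feq X (fcompose deltaF (Dfun epsF)) idF"
  by (simp add: feq_def fcompose_def deltaF_def epsF_def idF_def Dfun_def Dpow_app)

lemma deltaF_deltaF: "feq X (fcompose deltaF deltaF) (fcompose deltaF (Dfun deltaF))"
  by (simp add: feq_def fcompose_def deltaF_def Dfun_def Dpow_app fun_eq_iff add.commute add.left_commute)

lemma is_sclf_Dfun:
  assumes "is_clac X" "is_clac Y" "is_sclf X Y F"
  shows "is_sclf (Dcat X) (Dcat Y) (Dfun F)"
proof -
  interpret strict_clac_functor X Y F
    using assms by (simp add: strict_clac_functor_def strict_clac_functor_axioms_def clac_category_iff_is_clac)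
  show ?thesis by (rule Dfun_sclf)
qed

theorem proposition4p14:
  fixes X :: "('o, 'a) clac"
  assumes "is_clac X"
  shows
    \<comment> \<open>D is an endofunctor of CLAC\<close>
    "is_clac (Dcat X)
   \<and> feq (Dcat X) (Dfun (idF :: ('o, 'o, 'a, 'a) sfun)) idF
   \<and> (\<forall>(Y :: ('p, 'b) clac) (F :: ('o, 'p, 'a, 'b) sfun).
        is_clac Y \<and> is_sclf X Y F \<longrightarrow>
          is_sclf (Dcat X) (Dcat Y) (Dfun F)
          \<comment> \<open>naturality of epsilon and delta\<close>
        \<and> feq (Dcat X) (fcompose epsF F) (fcompose (Dfun F) epsF)
        \<and> feq (Dcat X) (fcompose deltaF (Dfun (Dfun F))) (fcompose (Dfun F) deltaF))
   \<and> (\<forall>(Y :: ('p, 'b) clac) (Z :: ('q, 'c) clac)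
        (F :: ('o, 'p, 'a, 'b) sfun) (G :: ('p, 'q, 'b, 'c) sfun).
        is_clac Y \<and> is_clac Z \<and> is_sclf X Y F \<and> is_sclf Y Z G \<longrightarrow>
          feq (Dcat X) (Dfun (fcompose F G)) (fcompose (Dfun F) (Dfun G)))
    \<comment> \<open>components of epsilon and delta are morphisms of CLAC\<close>
   \<and> is_sclf (Dcat X) X epsF
   \<and> is_sclf (Dcat X) (Dcat (Dcat X)) deltaF
    \<comment> \<open>comonad laws (diagrammatic order)\<close>
   \<and> feq (Dcat X) (fcompose deltaF epsF) idF
   \<and> feq (Dcat X) (fcompose deltaF (Dfun epsF)) idF
   \<and> feq (Dcat X) (fcompose deltaF deltaF) (fcompose deltaF (Dfun deltaF))"
proof -
  interpret clac_category X
    using assms by (simp add: clac_category_iff_is_clac)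
  show ?thesis
    using is_clac_Dcat epsF_sclf deltaF_sclf is_sclf_Dfun[OF assms]
    by (auto simp: Dfun_idF Dfun_fcompose epsF_natural deltaF_natural deltaF_epsF deltaF_Dfun_epsF deltaF_deltaF)
qed

end
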